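(* Let $f\colon G_1\to G_2$ be a group homomorphism that is isometric for $\operatorname{scl}$. Then for every $\varphi_1\in\operatorname{Q}(G_1)$ there exists $\varphi_2\in\operatorname{Q}(G_2)$ with $D(\varphi_2)=D(\varphi_1)$ and $\varphi_2\circ f=\varphi_1$. In particular, pullback along $f$ induces a surjection $\operatorname{Q}(G_2)/\operatorname{Hom}(G_2)\to\operatorname{Q}(G_1)/\operatorname{Hom}(G_1)$.
   Context: A quasimorphism on $G$ is a function $\varphi\colon G\to\mathbb{R}$ with finite defect $D(\varphi)=\sup_{g,h}|\varphi(g)+\varphi(h)-\varphi(gh)|$; it is homogeneous if $\varphi(g^n)=n\varphi(g)$ for all $g$, $n\in\mathbb{Z}$. $\operatorname{Q}(G)$ is the space of homogeneous quasimorphisms and $\operatorname{Hom}(G)$ the subspace of homomorphisms $G\to\mathbb{R}$. Stable commutator length on chains: $\operatorname{C}_1(G)$ is the real vector space with basis $G$. For an integral chain $c=\sum_i g_i$, $\operatorname{cl}_G(c)$ is the minimal number of commutators whose product equals some $\prod_i t_ig_it_i^{-1}$ ($t_i\in G$), and $\operatorname{scl}_G(c)=\lim_{n\to\infty}\operatorname{cl}_G(\sum_i g_i^n)/n$; extended by homogeneity and continuity to real chains, with value $\infty$ off the boundaries. $\operatorname{C}_1^H(G)$ is the quotient of $\operatorname{C}_1(G)$ by the span of all $g^n-ng$ ($n\in\mathbb{Z}$) and $hgh^{-1}-g$; $\operatorname{scl}_G$ descends to it. A homomorphism $f\colon G_1\to G_2$ is isometric for $\operatorname{scl}$ if the induced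 map $\operatorname{C}_1^H(G_1)\to\operatorname{C}_1^H(G_2)$ preserves $\operatorname{scl}$, including infinite values. *)

theory Defs
  imports "HOL-Algebra.Group" "HOL-Library.Extended_Real"
begin

definition defect_set :: "('a, 'b) monoid_scheme \<Rightarrow> ('a \<Rightarrow> real) \<Rightarrow> real set" where
  "defect_set G \<phi> =
     {\<bar>\<phi> g + \<phi> h - \<phi> (g \<otimes>\<^bsub>G\<^esub> h)\<bar> | g h. g \<in> carrier G \<and> h \<in> carrier G}"

definition quasimorphism :: "('a, 'b) monoid_scheme \<Rightarrow> ('a \<Rightarrow> real) \<Rightarrow> bool" where
  "quasimorphism G \<phi> \<longleftrightarrow> bdd_above (defect_set G \<phi>)"

definition defect :: "('a, 'b) monoid_scheme \<Rightarrow> ('a \<Rightarrow> real) \<Rightarrow> real" where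
  "defect G \<phi> = Sup (defect_set G \<phi>)"

definition homogeneous :: "('a, 'b) monoid_scheme \<Rightarrow> ('a \<Rightarrow> real) \<Rightarrow> bool" where
  "homogeneous G \<phi> \<longleftrightarrow>
     (\<forall>g \<in> carrier G. \<forall>n::int. \<phi> (g [^]\<^bsub>G\<^esub> n) = of_int n * \<phi> g)"

definition Qm :: "('a, 'b) monoid_scheme \<Rightarrow> ('a \<Rightarrow> real) set" where
  "Qm G = {\<phi>. quasimorphism G \<phi> \<and> homogeneous G \<phi>}"

definition Homr :: "('a, 'b) monoid_scheme \<Rightarrow> ('a \<Rightarrow> real) set" where
  "Homr G = {\<phi>. \<forall>g \<in> carrier G. \<forall>h \<in> carrier G. \<phi> (g \<otimes>\<^bsub>G\<^esub> h) = \<phi> g + \<phi> h}"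

definition prodl :: "('a, 'b) monoid_scheme \<Rightarrow> 'a list \<Rightarrow> 'a" where
  "prodl G xs = foldr (\<lambda>x y. x \<otimes>\<^bsub>G\<^esub> y) xs \<one>\<^bsub>G\<^esub>"

definition commutator :: "('a, 'b) monoid_scheme \<Rightarrow> 'a \<Rightarrow> 'a \<Rightarrow> 'a" where
  "commutator G a b = a \<otimes>\<^bsub>G\<^esub> b \<otimes>\<^bsub>G\<^esub> inv\<^bsub>G\<^esub> a \<otimes>\<^bsub>G\<^esub> inv\<^bsub>G\<^esub> b"

text \<open>cl of the integral chain g_1 + ... + g_m (given as the list gs): the minimal number of
  commutators whose product equals some product of conjugates t_i g_i t_i^{-1};
  infinity if there is no such expression.\<close>
definition cl :: "('a, 'b) monoid_scheme \<Rightarrow> 'a list \<Rightarrow> enat" where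
  "cl G gs = Inf {enat (length abs) | abs ts.
      set abs \<subseteq> carrier G \<times> carrier G \<and> set ts \<subseteq> carrier G \<and> length ts = length gs \<and>
      prodl G (map (\<lambda>(a, b). commutator G a b) abs) =
      prodl G (map (\<lambda>(t, g). t \<otimes>\<^bsub>G\<^esub> g \<otimes>\<^bsub>G\<^esub> inv\<^bsub>G\<^esub> t) (zip ts gs))}"

text \<open>scl of the integral chain g_1 + ... + g_m: the limit of cl(g_1^n + ... + g_m^n)/n,
  taken as a lim inf (this is the limit along those n for which the chain is a boundary,
  and infinity when it is never one).\<close>
definition scl :: "('a, 'b) monoid_scheme \<Rightarrow> 'a list \<Rightarrow> ereal" where
  "scl G gs = Liminf sequentially
     (\<lambda>n::nat. ereal_of_enat (cl G (map (\<lambda>g. g [^]\<^bsub>G\<^esub> n) gs)) / ereal (real n))"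

text \<open>Stated on integral chains with positive coefficients; by homogeneity and the relation
  -g = g^{-1} in C_1^H this determines scl on all rational chains of C_1^H, and
  real chains are handled by continuity.\<close>
definition scl_isometric ::
  "('a, 'b) monoid_scheme \<Rightarrow> ('c, 'd) monoid_scheme \<Rightarrow> ('a \<Rightarrow> 'c) \<Rightarrow> bool" where
  "scl_isometric G1 G2 f \<longleftrightarrow>
     (\<forall>gs. set gs \<subseteq> carrier G1 \<longrightarrow> scl G2 (map f gs) = scl G1 gs)"

end

theory Submission
  imports Defs "HOL-Library.Function_Algebras" "HOL-Library.Multiset"
begin

text \<open>
  Bavard's inequality \<open>\<phi>(c) \<le> 2 D(\<phi>) scl(c)\<close> for homogeneous quasimorphisms and the isometry
  hypothesis show that the partial functional \<open>f\<^sub>* c \<mapsto> \<phi>\<^sub>1(c)\<close> on pushed-forward rational chains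
  is dominated by \<open>2 D(\<phi>\<^sub>1) scl\<close> on the rational chains of \<open>G\<^sub>2\<close>. A Hahn--Banach extension
  \<open>\<Phi>\<close> over \<open>\<rat>\<close> gives \<open>\<phi>\<^sub>2(g) = \<Phi>(g)\<close>. The chains \<open>g\<^sup>n - n g\<close> and \<open>g + h - gh\<close> have scl
  \<open>0\<close> and at most \<open>1/2\<close>, so \<open>\<phi>\<^sub>2\<close> is homogeneous of defect at most \<open>D(\<phi>\<^sub>1)\<close>, and
  \<open>\<phi>\<^sub>2 \<circ> f = \<phi>\<^sub>1\<close> forces equality of the defects.
\<close>

section \<open>Hahn--Banach over the rationals\<close>

definition dominated_graph ::
  "(('i \<Rightarrow> rat) \<Rightarrow> real \<Rightarrow> bool) \<Rightarrow> (('i \<Rightarrow> rat) \<times> real) set \<Rightarrow> bool" where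
  "dominated_graph P \<Gamma> \<longleftrightarrow>
     (\<forall>a x b y. (a, x) \<in> \<Gamma> \<longrightarrow> (b, y) \<in> \<Gamma> \<longrightarrow> (a + b, x + y) \<in> \<Gamma>) \<and>
     (\<forall>a x q. (a, x) \<in> \<Gamma> \<longrightarrow> ((\<lambda>i. q * a i), of_rat q * x) \<in> \<Gamma>) \<and>
     (\<forall>a x r. (a, x) \<in> \<Gamma> \<longrightarrow> P a r \<longrightarrow> x \<le> r)"

lemma dominated_graphD:
  assumes "dominated_graph P \<Gamma>"
  shows dominated_graph_add: "(a, x) \<in> \<Gamma> \<Longrightarrow> (b, y) \<in> \<Gamma> \<Longrightarrow> (a + b, x + y) \<in> \<Gamma>"
    and dominated_graph_scale: "(a, x) \<in> \<Gamma> \<Longrightarrow> ((\<lambda>i. q * a i), of_rat q * x) \<in> \<Gamma>"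
    and dominated_graph_le: "(a, x) \<in> \<Gamma> \<Longrightarrow> P a r \<Longrightarrow> x \<le> r"
  using assms unfolding dominated_graph_def by blast+

lemma dominated_graph_uminus:
  assumes "dominated_graph P \<Gamma>" "(a, x) \<in> \<Gamma>"
  shows "(- a, - x) \<in> \<Gamma>"
  using dominated_graph_scale[OF assms, of "-1"] by (simp add: fun_Compl_def)

definition extend_graph ::
  "(('i \<Rightarrow> rat) \<times> real) set \<Rightarrow> ('i \<Rightarrow> rat) \<Rightarrow> real \<Rightarrow> (('i \<Rightarrow> rat) \<times> real) set" where
  "extend_graph \<Gamma> v t = {(w + (\<lambda>i. q * v i), x + of_rat q * t) | w x q. (w, x) \<in> \<Gamma>}"

lemma subset_extend_graph: "\<Gamma> \<subseteq> extend_graph \<Gamma> v t"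
proof (rule subrelI)
  fix w x assume "(w, x) \<in> \<Gamma>"
  moreover have "w = w + (\<lambda>i. 0 * v i)" "x = x + of_rat 0 * t"
    by (simp_all add: fun_eq_iff)
  ultimately show "(w, x) \<in> extend_graph \<Gamma> v t"
    unfolding extend_graph_def by blast
qed

lemma extend_graph_point: "(0, 0) \<in> \<Gamma> \<Longrightarrow> (v, t) \<in> extend_graph \<Gamma> v t"
proof -
  assume "(0, 0) \<in> \<Gamma>"
  moreover have "v = 0 + (\<lambda>i. 1 * v i)" "t = 0 + of_rat 1 * t"
    by (simp_all add: fun_eq_iff)
  ultimately show ?thesis
    unfolding extend_graph_def by blast
qed

lemma extend_graph_add:
  assumes \<Gamma>: "dominated_graph P \<Gamma>"
    and "(a, x) \<in> extend_graph \<Gamma> v t" and "(b, y) \<in> extend_graph \<Gamma> v t"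
  shows "(a + b, x + y) \<in> extend_graph \<Gamma> v t"
proof -
  obtain w1 x1 q1 w2 x2 q2 where "a = w1 + (\<lambda>i. q1 * v i)" "x = x1 + of_rat q1 * t" "(w1, x1) \<in> \<Gamma>"
    "b = w2 + (\<lambda>i. q2 * v i)" "y = x2 + of_rat q2 * t" "(w2, x2) \<in> \<Gamma>"
    using assms(2,3) unfolding extend_graph_def by blast
  moreover have "a + b = (w1 + w2) + (\<lambda>i. (q1 + q2) * v i)" "x + y = (x1 + x2) + of_rat (q1 + q2) * t"
    using calculation by (auto simp: fun_eq_iff algebra_simps of_rat_add)
  ultimately show ?thesis
    unfolding extend_graph_def using dominated_graph_add[OF \<Gamma>] by blast
qed

lemma extend_graph_scale:
  assumes \<Gamma>: "dominated_graph P \<Gamma>" and "(a, x) \<in> extend_graph \<Gamma> v t"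
  shows "((\<lambda>i. c * a i), of_rat c * x) \<in> extend_graph \<Gamma> v t"
proof -
  obtain w q y where "a = w + (\<lambda>i. q * v i)" "x = y + of_rat q * t" "(w, y) \<in> \<Gamma>"
    using assms(2) unfolding extend_graph_def by blast
  moreover have "(\<lambda>i. c * a i) = (\<lambda>i. c * w i) + (\<lambda>i. (c * q) * v i)"
    "of_rat c * x = of_rat c * y + of_rat (c * q) * t"
    using calculation by (auto simp: fun_eq_iff algebra_simps of_rat_mult)
  ultimately show ?thesis
    unfolding extend_graph_def using dominated_graph_scale[OF \<Gamma>] by blast
qed

text \<open>\<open>P a r\<close> says that \<open>r\<close> bounds a sublinear functional at \<open>a\<close>; the functional may be
  \<open>\<infinity>\<close> (no \<open>r\<close> at all) outside a subspace.\<close>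

locale sublinear_bound =
  fixes P :: "('i \<Rightarrow> rat) \<Rightarrow> real \<Rightarrow> bool"
  assumes add: "P a r \<Longrightarrow> P b s \<Longrightarrow> P (a + b) (r + s)"
    and scale: "P a r \<Longrightarrow> 0 < q \<Longrightarrow> P (\<lambda>i. q * a i) (of_rat q * r)"
    and domain_uminus: "P a r \<Longrightarrow> \<exists>s. P (- a) s"
    and zero: "P 0 0"
begin

lemma dominated_graph_unique:
  assumes \<Gamma>: "dominated_graph P \<Gamma>" and ax: "(a, x) \<in> \<Gamma>" and ay: "(a, y) \<in> \<Gamma>"
  shows "x = y"
proof -
  have "(0, x - y) \<in> \<Gamma>" "(0, y - x) \<in> \<Gamma>"
    using dominated_graph_add[OF \<Gamma> ax dominated_graph_uminus[OF \<Gamma> ay]]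
      dominated_graph_add[OF \<Gamma> ay dominated_graph_uminus[OF \<Gamma> ax]] by simp_all
  then have "x - y \<le> 0" "y - x \<le> 0"
    using dominated_graph_le[OF \<Gamma> _ zero] by blast+
  then show ?thesis by simp
qed

lemma dominated_graph_Union_chain:
  assumes "C \<in> chains {\<Gamma>. \<Gamma>0 \<subseteq> \<Gamma> \<and> dominated_graph P \<Gamma>}" and "C \<noteq> {}"
  shows "\<Gamma>0 \<subseteq> \<Union>C \<and> dominated_graph P (\<Union>C)"
proof -
  have dom: "\<And>\<Gamma>. \<Gamma> \<in> C \<Longrightarrow> \<Gamma>0 \<subseteq> \<Gamma> \<and> dominated_graph P \<Gamma>"
    using chainsD2[OF assms(1)] by blast
  have "(a + b, x + y) \<in> \<Union>C" if ax: "(a, x) \<in> \<Union>C" and b_y: "(b, y) \<in> \<Union>C" for a x b y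
  proof -
    obtain \<Gamma>1 \<Gamma>2 where \<Gamma>1: "\<Gamma>1 \<in> C" "(a, x) \<in> \<Gamma>1" and \<Gamma>2: "\<Gamma>2 \<in> C" "(b, y) \<in> \<Gamma>2"
      using ax b_y by blast
    consider "\<Gamma>1 \<subseteq> \<Gamma>2" | "\<Gamma>2 \<subseteq> \<Gamma>1"
      using chainsD[OF assms(1) \<Gamma>1(1) \<Gamma>2(1)] by blast
    then show ?thesis
    proof cases
      case 1
      then have "(a + b, x + y) \<in> \<Gamma>2"
        using dominated_graph_add[of P \<Gamma>2] dom[OF \<Gamma>2(1)] \<Gamma>1(2) \<Gamma>2(2) by blast
      then show ?thesis using \<Gamma>2(1) by blast
    next
      case 2
      then have "(a + b, x + y) \<in> \<Gamma>1"
        using dominated_graph_add[of P \<Gamma>1] dom[OF \<Gamma>1(1)] \<Gamma>1(2) \<Gamma>2(2) by blast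
      then show ?thesis using \<Gamma>1(1) by blast
    qed
  qed
  moreover have "((\<lambda>i. q * a i), of_rat q * x) \<in> \<Union>C" if "(a, x) \<in> \<Union>C" for a x q
    using that dom dominated_graph_scale by blast
  moreover have "x \<le> r" if "(a, x) \<in> \<Union>C" "P a r" for a x r
    using that dom dominated_graph_le by blast
  moreover have "\<Gamma>0 \<subseteq> \<Union>C"
    using dom assms(2) by blast
  ultimately show ?thesis
    unfolding dominated_graph_def by blast
qed

lemma dominated_graph_extension_value:
  assumes \<Gamma>: "dominated_graph P \<Gamma>"
  obtains t where "\<And>w x r. (w, x) \<in> \<Gamma> \<Longrightarrow> P (w + v) r \<Longrightarrow> x + t \<le> r"
    and "\<And>w x r. (w, x) \<in> \<Gamma> \<Longrightarrow> P (w - v) r \<Longrightarrow> x - t \<le> r"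
proof -
  define Lo where "Lo = {x - r | w x r. (w, x) \<in> \<Gamma> \<and> P (w - v) r}"
  define Up where "Up = {r - x | w x r. (w, x) \<in> \<Gamma> \<and> P (w + v) r}"
  have Lo_le_Up: "l \<le> u" if l: "l \<in> Lo" and u: "u \<in> Up" for l u
  proof -
    obtain w1 x1 r1 where 1: "l = x1 - r1" "(w1, x1) \<in> \<Gamma>" "P (w1 - v) r1"
      using l unfolding Lo_def by blast
    obtain w2 x2 r2 where 2: "u = r2 - x2" "(w2, x2) \<in> \<Gamma>" "P (w2 + v) r2"
      using u unfolding Up_def by blast
    have "P (w1 + w2) (r1 + r2)"
      using add[OF 1(3) 2(3)] by (simp add: algebra_simps)
    then have "x1 + x2 \<le> r1 + r2"
      using dominated_graph_le[OF \<Gamma> dominated_graph_add[OF \<Gamma> 1(2) 2(2)]] by simp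
    then show ?thesis using 1 2 by simp
  qed
  have Lo_Up_nonempty: "Lo \<noteq> {} \<longleftrightarrow> Up \<noteq> {}"
  proof
    assume "Lo \<noteq> {}"
    then obtain w x r where "(w, x) \<in> \<Gamma>" "P (w - v) r" unfolding Lo_def by blast
    moreover obtain s where "P (- w + v) s" using domain_uminus[OF \<open>P (w - v) r\<close>] by auto
    ultimately show "Up \<noteq> {}"
      using dominated_graph_uminus[OF \<Gamma>] unfolding Up_def by blast
  next
    assume "Up \<noteq> {}"
    then obtain w x r where "(w, x) \<in> \<Gamma>" "P (w + v) r" unfolding Up_def by blast
    moreover obtain s where "P (- w - v) s" using domain_uminus[OF \<open>P (w + v) r\<close>] by auto
    ultimately show "Lo \<noteq> {}"
      using dominated_graph_uminus[OF \<Gamma>] unfolding Lo_def by blast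
  qed
  define t where "t = (if Lo = {} then 0 else Sup Lo)"
  show thesis
  proof
    fix w x r assume "(w, x) \<in> \<Gamma>" "P (w + v) r"
    then have "r - x \<in> Up" unfolding Up_def by blast
    moreover from this have "t \<le> r - x"
      using Lo_Up_nonempty Lo_le_Up unfolding t_def by (auto intro!: cSup_least)
    ultimately show "x + t \<le> r" by simp
  next
    fix w x r assume "(w, x) \<in> \<Gamma>" "P (w - v) r"
    then have "x - r \<in> Lo" unfolding Lo_def by blast
    moreover from this obtain u where "u \<in> Up"
      using Lo_Up_nonempty by blast
    then have "bdd_above Lo"
      using Lo_le_Up by (intro bdd_aboveI[of _ u]) blast
    ultimately show "x - t \<le> r"
      unfolding t_def using cSup_upper by fastforce
  qed
qed

lemma extend_graph_le:
  assumes \<Gamma>: "dominated_graph P \<Gamma>"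
    and up: "\<And>w x r. (w, x) \<in> \<Gamma> \<Longrightarrow> P (w + v) r \<Longrightarrow> x + t \<le> r"
    and lo: "\<And>w x r. (w, x) \<in> \<Gamma> \<Longrightarrow> P (w - v) r \<Longrightarrow> x - t \<le> r"
    and "(a, x) \<in> extend_graph \<Gamma> v t" and Par: "P a r"
  shows "x \<le> r"
proof -
  obtain w q y where a: "a = w + (\<lambda>i. q * v i)" and x: "x = y + of_rat q * t"
    and wy: "(w, y) \<in> \<Gamma>"
    using assms(4) unfolding extend_graph_def by blast
  consider "q = 0" | "q > 0" | "q < 0" by linarith
  then show ?thesis
  proof cases
    case 1
    then have "a = w" using a by (simp add: fun_eq_iff)
    then show ?thesis using dominated_graph_le[OF \<Gamma> wy] Par x 1 by simp
  next
    case 2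
    have "(\<lambda>i. (1 / q) * a i) = (\<lambda>i. (1 / q) * w i) + v"
      using 2 by (auto simp: a fun_eq_iff field_simps)
    then have "of_rat (1 / q) * y + t \<le> of_rat (1 / q) * r"
      using up[OF dominated_graph_scale[OF \<Gamma> wy]] scale[OF Par, of "1 / q"] 2 by simp
    then have "(y + of_rat q * t) / of_rat q \<le> r / of_rat q"
      using 2 by (simp add: of_rat_divide add_divide_distrib)
    then show ?thesis
      using 2 by (simp add: x divide_le_cancel)
  next
    case 3
    have "(\<lambda>i. (- 1 / q) * a i) = (\<lambda>i. (- 1 / q) * w i) - v"
      using 3 by (auto simp: a fun_eq_iff field_simps)
    then have "of_rat (- 1 / q) * y - t \<le> of_rat (- 1 / q) * r"
      using lo[OF dominated_graph_scale[OF \<Gamma> wy]] scale[OF Par, of "- 1 / q"] 3 by simp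
    then have "r / of_rat q \<le> (y + of_rat q * t) / of_rat q"
      using 3 by (simp add: of_rat_divide of_rat_minus add_divide_distrib)
    then show ?thesis
      using 3 by (simp add: x divide_le_cancel)
  qed
qed

lemma dominated_graph_extend:
  assumes \<Gamma>: "dominated_graph P \<Gamma>" and "(0, 0) \<in> \<Gamma>"
  obtains \<Gamma>' t where "dominated_graph P \<Gamma>'" and "\<Gamma> \<subseteq> \<Gamma>'" and "(v, t) \<in> \<Gamma>'"
proof -
  obtain t where up: "\<And>w x r. (w, x) \<in> \<Gamma> \<Longrightarrow> P (w + v) r \<Longrightarrow> x + t \<le> r"
    and lo: "\<And>w x r. (w, x) \<in> \<Gamma> \<Longrightarrow> P (w - v) r \<Longrightarrow> x - t \<le> r"
    using dominated_graph_extension_value[OF \<Gamma>] by blast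
  have "x \<le> r" if "(a, x) \<in> extend_graph \<Gamma> v t" "P a r" for a x r
    using \<Gamma> up lo that by (rule extend_graph_le)
  then have "dominated_graph P (extend_graph \<Gamma> v t)"
    unfolding dominated_graph_def using extend_graph_add[OF \<Gamma>] extend_graph_scale[OF \<Gamma>] by blast
  then show thesis
    using that subset_extend_graph extend_graph_point[OF \<open>(0, 0) \<in> \<Gamma>\<close>] by blast
qed

lemma maximal_dominated_graph:
  assumes \<Gamma>0: "dominated_graph P \<Gamma>0" and "(0, 0) \<in> \<Gamma>0"
  obtains M where "\<Gamma>0 \<subseteq> M" and "dominated_graph P M" and "\<And>a. \<exists>x. (a, x) \<in> M"
proof -
  let ?A = "{\<Gamma>. \<Gamma>0 \<subseteq> \<Gamma> \<and> dominated_graph P \<Gamma>}"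
  have "\<forall>C \<in> chains ?A. \<exists>U \<in> ?A. \<forall>X \<in> C. X \<subseteq> U"
  proof
    fix C assume C: "C \<in> chains ?A"
    show "\<exists>U \<in> ?A. \<forall>X \<in> C. X \<subseteq> U"
    proof (cases "C = {}")
      case True
      then show ?thesis using \<Gamma>0 by blast
    next
      case False
      then show ?thesis using dominated_graph_Union_chain[OF C False] by blast
    qed
  qed
  from Zorn_Lemma2[OF this] obtain M where "M \<in> ?A" and M_max: "\<forall>\<Gamma> \<in> ?A. M \<subseteq> \<Gamma> \<longrightarrow> \<Gamma> = M"
    by blast
  then have M: "\<Gamma>0 \<subseteq> M" "dominated_graph P M" by simp_all
  have "\<exists>x. (a, x) \<in> M" for a
  proof -
    obtain \<Gamma> t where \<Gamma>: "dominated_graph P \<Gamma>" "M \<subseteq> \<Gamma>" "(a, t) \<in> \<Gamma>"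
      using dominated_graph_extend[OF M(2)] M(1) \<open>(0, 0) \<in> \<Gamma>0\<close> by blast
    moreover have "\<Gamma>0 \<subseteq> \<Gamma>" using M(1) \<Gamma>(2) by (rule order_trans)
    ultimately have "\<Gamma> = M" using M_max by blast
    then show ?thesis using \<Gamma>(3) by blast
  qed
  with M that show thesis by blast
qed

theorem rat_hahn_banach:
  assumes "dominated_graph P \<Gamma>0" and "(0, 0) \<in> \<Gamma>0"
  obtains \<Phi> where "\<And>a b. \<Phi> (a + b) = \<Phi> a + \<Phi> b"
    and "\<And>q a. \<Phi> (\<lambda>i. q * a i) = of_rat q * \<Phi> a"
    and "\<And>a x. (a, x) \<in> \<Gamma>0 \<Longrightarrow> \<Phi> a = x"
    and "\<And>a r. P a r \<Longrightarrow> \<Phi> a \<le> r"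
proof -
  obtain M where M: "\<Gamma>0 \<subseteq> M" "dominated_graph P M" and M_total: "\<And>a. \<exists>x. (a, x) \<in> M"
    using maximal_dominated_graph[OF assms] by blast
  define \<Phi> where "\<Phi> a = (THE x. (a, x) \<in> M)" for a
  have \<Phi>_eq: "\<Phi> a = x" if "(a, x) \<in> M" for a x
    unfolding \<Phi>_def
    by (rule the_equality) (use that dominated_graph_unique[OF M(2)] in blast)+
  have \<Phi>_graph: "(a, \<Phi> a) \<in> M" for a
    using M_total \<Phi>_eq by blast
  show thesis
  proof
    show "\<Phi> (a + b) = \<Phi> a + \<Phi> b" for a b
      using \<Phi>_eq dominated_graph_add[OF M(2) \<Phi>_graph \<Phi>_graph] by blast
    show "\<Phi> (\<lambda>i. q * a i) = of_rat q * \<Phi> a" for q a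
      using \<Phi>_eq dominated_graph_scale[OF M(2) \<Phi>_graph] by blast
    show "\<Phi> a = x" if "(a, x) \<in> \<Gamma>0" for a x
      using \<Phi>_eq that M(1) by blast
    show "\<Phi> a \<le> r" if "P a r" for a r
      using dominated_graph_le[OF M(2) \<Phi>_graph that] .
  qed
qed

end

definition commutator_products :: "('a, 'b) monoid_scheme \<Rightarrow> nat \<Rightarrow> 'a set" where
  "commutator_products G K = {prodl G (map (\<lambda>(a, b). commutator G a b) abs) | abs.
      set abs \<subseteq> carrier G \<times> carrier G \<and> length abs = K}"

definition conjugate_products :: "('a, 'b) monoid_scheme \<Rightarrow> 'a list \<Rightarrow> 'a set" where
  "conjugate_products G gs = {prodl G (map (\<lambda>(t, g). t \<otimes>\<^bsub>G\<^esub> g \<otimes>\<^bsub>G\<^esub> inv\<^bsub>G\<^esub> t) (zip ts gs)) | ts.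
      set ts \<subseteq> carrier G \<and> length ts = length gs}"

context group
begin

lemma prodl_Nil [simp]: "prodl G [] = \<one>"
  by (simp add: prodl_def)

lemma prodl_Cons [simp]: "prodl G (x # xs) = x \<otimes> prodl G xs"
  by (simp add: prodl_def)

lemma prodl_closed: "set xs \<subseteq> carrier G \<Longrightarrow> prodl G xs \<in> carrier G"
  by (induction xs) auto

lemma inv_mult_cancel_left [simp]:
  "x \<in> carrier G \<Longrightarrow> y \<in> carrier G \<Longrightarrow> inv x \<otimes> (x \<otimes> y) = y"
  by (simp add: m_assoc[symmetric])

lemma mult_inv_cancel_left [simp]:
  "x \<in> carrier G \<Longrightarrow> y \<in> carrier G \<Longrightarrow> x \<otimes> (inv x \<otimes> y) = y"
  by (simp add: m_assoc[symmetric])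

lemma commutator_closed [simp]:
  "a \<in> carrier G \<Longrightarrow> b \<in> carrier G \<Longrightarrow> commutator G a b \<in> carrier G"
  by (simp add: commutator_def)

lemma commutator_conj:
  "t \<in> carrier G \<Longrightarrow> a \<in> carrier G \<Longrightarrow> b \<in> carrier G \<Longrightarrow>
    commutator G (t \<otimes> a \<otimes> inv t) (t \<otimes> b \<otimes> inv t) = t \<otimes> commutator G a b \<otimes> inv t"
  by (simp add: commutator_def m_assoc inv_mult_group)

lemma inv_commutator:
  "a \<in> carrier G \<Longrightarrow> b \<in> carrier G \<Longrightarrow> inv (commutator G a b) = commutator G b a"
  by (simp add: commutator_def m_assoc inv_mult_group)

lemma conj_nat_pow:
  "t \<in> carrier G \<Longrightarrow> x \<in> carrier G \<Longrightarrow> (t \<otimes> x \<otimes> inv t) [^] (n::nat) = t \<otimes> x [^] n \<otimes> inv t"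
  by (induction n) (auto simp: m_assoc)

lemma commutator_products_0 [simp]: "commutator_products G 0 = {\<one>}"
  by (auto simp: commutator_products_def)

lemma commutator_products_Suc:
  "commutator_products G (Suc K) =
    {commutator G a b \<otimes> z | a b z. a \<in> carrier G \<and> b \<in> carrier G \<and> z \<in> commutator_products G K}"
proof safe
  fix x assume "x \<in> commutator_products G (Suc K)"
  then obtain abs where "set abs \<subseteq> carrier G \<times> carrier G" "length abs = Suc K"
    "x = prodl G (map (\<lambda>(a, b). commutator G a b) abs)"
    unfolding commutator_products_def by blast
  then show "\<exists>a b z. x = commutator G a b \<otimes> z \<and> a \<in> carrier G \<and> b \<in> carrier G \<and>
      z \<in> commutator_products G K"
    by (cases abs) (auto simp: commutator_products_def)
next
  fix a b z assume ab: "a \<in> carrier G" "b \<in> carrier G" and "z \<in> commutator_products G K"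
  then obtain abs where "set abs \<subseteq> carrier G \<times> carrier G" "length abs = K"
    "z = prodl G (map (\<lambda>(a, b). commutator G a b) abs)"
    unfolding commutator_products_def by blast
  then show "commutator G a b \<otimes> z \<in> commutator_products G (Suc K)"
    unfolding commutator_products_def using ab by (intro CollectI exI[of _ "(a, b) # abs"]) auto
qed

lemma commutator_products_closed: "z \<in> commutator_products G K \<Longrightarrow> z \<in> carrier G"
  by (induction K arbitrary: z) (auto simp: commutator_products_Suc)

lemma commutator_products_mult:
  "z \<in> commutator_products G K \<Longrightarrow> z' \<in> commutator_products G K' \<Longrightarrow>
    z \<otimes> z' \<in> commutator_products G (K + K')"
proof (induction K arbitrary: z)
  case 0
  then show ?case using commutator_products_closed by simp
next
  case (Suc K)
  then obtain a b w where "z = commutator G a b \<otimes> w" "a \<in> carrier G" "b \<in> carrier G"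
    "w \<in> commutator_products G K"
    by (auto simp: commutator_products_Suc)
  moreover from this have "w \<otimes> z' \<in> commutator_products G (K + K')"
    using Suc by blast
  ultimately show ?case
    using commutator_products_closed Suc.prems by (auto simp: commutator_products_Suc m_assoc)
qed

lemma commutator_in_commutator_products:
  assumes "a \<in> carrier G" "b \<in> carrier G"
  shows "commutator G a b \<in> commutator_products G 1"
proof -
  have "commutator G a b \<otimes> \<one> \<in> commutator_products G (Suc 0)"
    unfolding commutator_products_Suc commutator_products_0 using assms by blast
  then show ?thesis using assms by simp
qed

lemma commutator_products_mono:
  assumes "K \<le> K'" and z: "z \<in> commutator_products G K"
  shows "z \<in> commutator_products G K'"
  using assms(1)
proof (induction K' rule: dec_induct)
  case base
  then show ?case using z .
next
  case (step n)
  then have "z \<otimes> commutator G \<one> \<one> \<in> commutator_products G (n + 1)"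
    using commutator_products_mult commutator_in_commutator_products by blast
  then show ?case
    using z commutator_products_closed by (simp add: commutator_def)
qed

lemma commutator_products_conj:
  "z \<in> commutator_products G K \<Longrightarrow> t \<in> carrier G \<Longrightarrow> t \<otimes> z \<otimes> inv t \<in> commutator_products G K"
proof (induction K arbitrary: z)
  case 0
  then show ?case by simp
next
  case (Suc K)
  then obtain a b w where z: "z = commutator G a b \<otimes> w" "a \<in> carrier G" "b \<in> carrier G"
    and w: "w \<in> commutator_products G K"
    by (auto simp: commutator_products_Suc)
  have "t \<otimes> z \<otimes> inv t = (t \<otimes> commutator G a b \<otimes> inv t) \<otimes> (t \<otimes> w \<otimes> inv t)"
    using z Suc.prems commutator_products_closed[OF w] by (simp add: m_assoc)
  also have "\<dots> = commutator G (t \<otimes> a \<otimes> inv t) (t \<otimes> b \<otimes> inv t) \<otimes> (t \<otimes> w \<otimes> inv t)"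
    using z Suc.prems by (simp add: commutator_conj)
  finally have "t \<otimes> z \<otimes> inv t =
      commutator G (t \<otimes> a \<otimes> inv t) (t \<otimes> b \<otimes> inv t) \<otimes> (t \<otimes> w \<otimes> inv t)" .
  moreover have "t \<otimes> a \<otimes> inv t \<in> carrier G" "t \<otimes> b \<otimes> inv t \<in> carrier G"
    using z Suc.prems by simp_all
  ultimately show ?case
    unfolding commutator_products_Suc using Suc.IH[OF w Suc.prems(2)] by blast
qed

lemma commutator_products_inv:
  "z \<in> commutator_products G K \<Longrightarrow> inv z \<in> commutator_products G K"
proof (induction K arbitrary: z)
  case 0
  then show ?case by simp
next
  case (Suc K)
  then obtain a b w where z: "z = commutator G a b \<otimes> w" "a \<in> carrier G" "b \<in> carrier G"
    and w: "w \<in> commutator_products G K"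
    by (auto simp: commutator_products_Suc)
  have "inv z = inv w \<otimes> commutator G b a"
    using z commutator_products_closed[OF w] by (simp add: inv_mult_group inv_commutator)
  moreover have "inv w \<otimes> commutator G b a \<in> commutator_products G (K + 1)"
    using commutator_products_mult Suc.IH[OF w] commutator_in_commutator_products z by blast
  ultimately show ?case by simp
qed

lemma commutator_products_pow:
  "z \<in> commutator_products G K \<Longrightarrow> z [^] (n::nat) \<in> commutator_products G (n * K)"
proof (induction n)
  case (Suc n)
  then have "z [^] n \<otimes> z \<in> commutator_products G (n * K + K)"
    using commutator_products_mult by blast
  then show ?case by (simp add: add.commute)
qed simp

lemma pants_in_commutator_products:
  assumes g: "g \<in> carrier G" and h: "h \<in> carrier G"
  shows "g [^] (n::nat) \<otimes> h [^] n \<otimes> inv ((g \<otimes> h) [^] n) \<in> commutator_products G (n div 2)"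
proof (induction n rule: nat_less_induct)
  case (1 n)
  consider "n = 0" | "n = 1" | m where "n = Suc (Suc m)"
    by (metis One_nat_def not0_implies_Suc)
  then show ?case
  proof cases
    case 1
    then show ?thesis by simp
  next
    case 2
    then show ?thesis using g h by (simp add: m_assoc)
  next
    case (3 m)
    define T where "T = g [^] m \<otimes> h [^] m \<otimes> inv g"
    have T: "T \<in> carrier G" using g h by (simp add: T_def)
    \<comment> \<open>raising the exponent by two costs one conjugated commutator\<close>
    have "g [^] n \<otimes> h [^] n \<otimes> inv ((g \<otimes> h) [^] n) =
        T \<otimes> commutator G (g \<otimes> inv (h [^] m)) (g \<otimes> g \<otimes> h) \<otimes> inv T \<otimes>
        (g [^] m \<otimes> h [^] m \<otimes> inv ((g \<otimes> h) [^] m))"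
    proof -
      have "h [^] n = h [^] Suc m \<otimes> h"
        unfolding 3 by (rule nat_pow_Suc)
      also have "h [^] Suc m = h \<otimes> h [^] m"
        by (rule nat_pow_Suc2[OF h])
      finally have "h [^] n = h \<otimes> h [^] m \<otimes> h" .
      moreover have "g [^] n = g [^] m \<otimes> g \<otimes> g"
        "(g \<otimes> h) [^] n = (g \<otimes> h) [^] m \<otimes> (g \<otimes> h) \<otimes> (g \<otimes> h)"
        unfolding 3 by simp_all
      moreover have "g [^] m \<in> carrier G" "h [^] m \<in> carrier G" "(g \<otimes> h) [^] m \<in> carrier G"
        using g h by simp_all
      ultimately show ?thesis
        using g h by (simp add: T_def commutator_def m_assoc inv_mult_group)
    qed
    moreover have "T \<otimes> commutator G (g \<otimes> inv (h [^] m)) (g \<otimes> g \<otimes> h) \<otimes> inv T \<otimes>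
        (g [^] m \<otimes> h [^] m \<otimes> inv ((g \<otimes> h) [^] m)) \<in> commutator_products G (1 + m div 2)"
      using commutator_products_mult[OF commutator_products_conj[OF commutator_in_commutator_products T]]
        "1.IH" 3 g h by simp
    ultimately show ?thesis using 3 by simp
  qed
qed

lemma conjugate_products_Nil [simp]: "conjugate_products G [] = {\<one>}"
  by (auto simp: conjugate_products_def)

lemma conjugate_products_Cons:
  "conjugate_products G (x # xs) =
    {t \<otimes> x \<otimes> inv t \<otimes> z | t z. t \<in> carrier G \<and> z \<in> conjugate_products G xs}"
proof safe
  fix w assume "w \<in> conjugate_products G (x # xs)"
  then obtain ts where "set ts \<subseteq> carrier G" "length ts = Suc (length xs)"
    "w = prodl G (map (\<lambda>(t, g). t \<otimes> g \<otimes> inv t) (zip ts (x # xs)))"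
    unfolding conjugate_products_def by auto
  then show "\<exists>t z. w = t \<otimes> x \<otimes> inv t \<otimes> z \<and> t \<in> carrier G \<and> z \<in> conjugate_products G xs"
    by (cases ts) (auto simp: conjugate_products_def)
next
  fix t z assume t: "t \<in> carrier G" and "z \<in> conjugate_products G xs"
  then obtain ts where "set ts \<subseteq> carrier G" "length ts = length xs"
    "z = prodl G (map (\<lambda>(t, g). t \<otimes> g \<otimes> inv t) (zip ts xs))"
    unfolding conjugate_products_def by blast
  then show "t \<otimes> x \<otimes> inv t \<otimes> z \<in> conjugate_products G (x # xs)"
    unfolding conjugate_products_def using t by (intro CollectI exI[of _ "t # ts"]) auto
qed

lemma conjugate_products_ConsI:
  "t \<in> carrier G \<Longrightarrow> z \<in> conjugate_products G xs \<Longrightarrow> t \<otimes> x \<otimes> inv t \<otimes> z \<in> conjugate_products G (x # xs)"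
  unfolding conjugate_products_Cons by blast

lemma conjugate_products_ConsE:
  assumes "w \<in> conjugate_products G (x # xs)"
  obtains t z where "w = t \<otimes> x \<otimes> inv t \<otimes> z" "t \<in> carrier G" "z \<in> conjugate_products G xs"
  using assms unfolding conjugate_products_Cons by blast

lemma conjugate_products_closed:
  "set xs \<subseteq> carrier G \<Longrightarrow> z \<in> conjugate_products G xs \<Longrightarrow> z \<in> carrier G"
  by (induction xs arbitrary: z) (auto simp: conjugate_products_Cons)

lemma prodl_in_conjugate_products:
  "set xs \<subseteq> carrier G \<Longrightarrow> prodl G xs \<in> conjugate_products G xs"
proof (induction xs)
  case (Cons x xs)
  then have "\<one> \<otimes> x \<otimes> inv \<one> \<otimes> prodl G xs \<in> conjugate_products G (x # xs)"
    by (intro conjugate_products_ConsI) auto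
  then show ?case using Cons.prems prodl_closed by simp
qed simp

lemma conjugate_products_append:
  assumes "set xs \<subseteq> carrier G" "set ys \<subseteq> carrier G"
  shows "conjugate_products G (xs @ ys) =
    {u \<otimes> v | u v. u \<in> conjugate_products G xs \<and> v \<in> conjugate_products G ys}"
  using assms(1)
proof (induction xs)
  case Nil
  then show ?case using conjugate_products_closed[OF assms(2)] by force
next
  case (Cons x xs)
  have x: "x \<in> carrier G" and xs: "set xs \<subseteq> carrier G" using Cons.prems by auto
  have closed: "\<And>u. u \<in> conjugate_products G xs \<Longrightarrow> u \<in> carrier G"
    "\<And>v. v \<in> conjugate_products G ys \<Longrightarrow> v \<in> carrier G"
    using conjugate_products_closed xs assms(2) by blast+
  show ?case
  proof safe
    fix w assume "w \<in> conjugate_products G ((x # xs) @ ys)"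
    then obtain t z where "w = t \<otimes> x \<otimes> inv t \<otimes> z" "t \<in> carrier G" "z \<in> conjugate_products G (xs @ ys)"
      by (auto elim: conjugate_products_ConsE)
    moreover from this obtain u v where "z = u \<otimes> v"
      "u \<in> conjugate_products G xs" "v \<in> conjugate_products G ys"
      using Cons.IH[OF xs] by blast
    ultimately have "w = (t \<otimes> x \<otimes> inv t \<otimes> u) \<otimes> v"
      using x closed by (simp add: m_assoc)
    moreover have "t \<otimes> x \<otimes> inv t \<otimes> u \<in> conjugate_products G (x # xs)"
      using \<open>t \<in> carrier G\<close> \<open>u \<in> conjugate_products G xs\<close> by (rule conjugate_products_ConsI)
    ultimately show "\<exists>u v. w = u \<otimes> v \<and> u \<in> conjugate_products G (x # xs) \<and> v \<in> conjugate_products G ys"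
      using \<open>v \<in> conjugate_products G ys\<close> by blast
  next
    fix u v assume "u \<in> conjugate_products G (x # xs)" and v: "v \<in> conjugate_products G ys"
    then obtain t z where "u = t \<otimes> x \<otimes> inv t \<otimes> z" "t \<in> carrier G" "z \<in> conjugate_products G xs"
      by (auto elim: conjugate_products_ConsE)
    moreover from this have "z \<otimes> v \<in> conjugate_products G (xs @ ys)"
      using Cons.IH[OF xs] v by blast
    ultimately have "t \<otimes> x \<otimes> inv t \<otimes> (z \<otimes> v) \<in> conjugate_products G ((x # xs) @ ys)"
      by (auto intro: conjugate_products_ConsI)
    then show "u \<otimes> v \<in> conjugate_products G ((x # xs) @ ys)"
      using \<open>u = _\<close> \<open>t \<in> carrier G\<close> \<open>z \<in> conjugate_products G xs\<close> x closed v
      by (simp add: m_assoc)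
  qed
qed

lemma conjugate_products_move_to_front:
  assumes xs: "set xs \<subseteq> carrier G" and ys: "set ys \<subseteq> carrier G" and x: "x \<in> carrier G"
  shows "conjugate_products G (xs @ x # ys) = conjugate_products G (x # xs @ ys)"
proof safe
  fix w assume "w \<in> conjugate_products G (xs @ x # ys)"
  then obtain u t z where w: "w = u \<otimes> (t \<otimes> x \<otimes> inv t \<otimes> z)" and t: "t \<in> carrier G"
    and u: "u \<in> conjugate_products G xs" and z: "z \<in> conjugate_products G ys"
    using conjugate_products_append[OF xs] ys x by (auto elim: conjugate_products_ConsE)
  have uc: "u \<in> carrier G" and zc: "z \<in> carrier G"
    using u z conjugate_products_closed xs ys by blast+
  \<comment> \<open>conjugating by the prefix moves it past the new first factor\<close>
  have "w = (u \<otimes> t) \<otimes> x \<otimes> inv (u \<otimes> t) \<otimes> (u \<otimes> z)"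
    using w uc zc t x by (simp add: m_assoc inv_mult_group)
  moreover have "u \<otimes> z \<in> conjugate_products G (xs @ ys)"
    using conjugate_products_append[OF xs ys] u z by blast
  ultimately show "w \<in> conjugate_products G (x # xs @ ys)"
    using uc t by (auto intro: conjugate_products_ConsI)
next
  fix w assume "w \<in> conjugate_products G (x # xs @ ys)"
  then obtain t z where wz: "w = t \<otimes> x \<otimes> inv t \<otimes> z" and t: "t \<in> carrier G"
    and "z \<in> conjugate_products G (xs @ ys)"
    by (auto elim: conjugate_products_ConsE)
  then obtain u v where "z = u \<otimes> v"
    and u: "u \<in> conjugate_products G xs" and v: "v \<in> conjugate_products G ys"
    using conjugate_products_append[OF xs ys] by blast
  with wz have w: "w = t \<otimes> x \<otimes> inv t \<otimes> (u \<otimes> v)" by simp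
  have uc: "u \<in> carrier G" and vc: "v \<in> carrier G"
    using u v conjugate_products_closed xs ys by blast+
  have "w = u \<otimes> ((inv u \<otimes> t) \<otimes> x \<otimes> inv (inv u \<otimes> t) \<otimes> v)"
    using w uc vc t x by (simp add: m_assoc inv_mult_group)
  moreover have "(inv u \<otimes> t) \<otimes> x \<otimes> inv (inv u \<otimes> t) \<otimes> v \<in> conjugate_products G (x # ys)"
    using uc t v by (auto intro: conjugate_products_ConsI)
  ultimately show "w \<in> conjugate_products G (xs @ x # ys)"
    using conjugate_products_append[OF xs] ys x u by auto
qed

lemma conjugate_products_perm:
  "mset xs = mset ys \<Longrightarrow> set xs \<subseteq> carrier G \<Longrightarrow> conjugate_products G xs = conjugate_products G ys"
proof (induction xs arbitrary: ys)
  case (Cons x xs)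
  have "x \<in> set ys" using Cons.prems by (metis list.set_intros(1) set_mset_mset)
  then obtain ys1 ys2 where ys: "ys = ys1 @ x # ys2" by (meson split_list)
  have "set ys \<subseteq> carrier G" using Cons.prems by (metis set_mset_mset)
  then have "conjugate_products G ys = conjugate_products G (x # ys1 @ ys2)"
    using conjugate_products_move_to_front ys by auto
  also have "\<dots> = conjugate_products G (x # xs)"
    using Cons.IH[of "ys1 @ ys2"] Cons.prems ys by (simp add: conjugate_products_Cons)
  finally show ?case by simp
qed simp

lemma conjugate_products_one_Cons:
  "set xs \<subseteq> carrier G \<Longrightarrow> conjugate_products G (\<one> # xs) = conjugate_products G xs"
  using conjugate_products_closed by (force simp: conjugate_products_Cons)

lemma conjugate_products_split_pow:
  assumes g: "g \<in> carrier G" and xs: "set xs \<subseteq> carrier G"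
  shows "conjugate_products G (g [^] (a + b :: int) # xs) \<subseteq> conjugate_products G (g [^] a # g [^] b # xs)"
proof
  fix w assume "w \<in> conjugate_products G (g [^] (a + b) # xs)"
  then obtain t z where w: "w = t \<otimes> g [^] (a + b) \<otimes> inv t \<otimes> z" and t: "t \<in> carrier G"
    and z: "z \<in> conjugate_products G xs"
    by (auto elim: conjugate_products_ConsE)
  then have "w = t \<otimes> g [^] a \<otimes> inv t \<otimes> (t \<otimes> g [^] b \<otimes> inv t \<otimes> z)"
    using g conjugate_products_closed[OF xs z] by (simp add: int_pow_mult m_assoc)
  then show "w \<in> conjugate_products G (g [^] a # g [^] b # xs)"
    using t z by (auto intro!: conjugate_products_ConsI)
qed

lemma conjugate_products_rev_inv:
  "set xs \<subseteq> carrier G \<Longrightarrow> z \<in> conjugate_products G xs \<Longrightarrow>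
    inv z \<in> conjugate_products G (rev (map (\<lambda>x. inv x) xs))"
proof (induction xs arbitrary: z)
  case (Cons x xs)
  then obtain t w where z: "z = t \<otimes> x \<otimes> inv t \<otimes> w" and t: "t \<in> carrier G"
    and w: "w \<in> conjugate_products G xs"
    by (auto elim: conjugate_products_ConsE)
  have "inv z = inv w \<otimes> (t \<otimes> inv x \<otimes> inv t \<otimes> \<one>)"
    using z t Cons.prems conjugate_products_closed[OF _ w] by (simp add: inv_mult_group m_assoc)
  moreover have "t \<otimes> inv x \<otimes> inv t \<otimes> \<one> \<in> conjugate_products G [inv x]"
    using t by (auto intro: conjugate_products_ConsI)
  moreover have "inv w \<in> conjugate_products G (rev (map (\<lambda>x. inv x) xs))"
    using Cons w by auto
  ultimately show ?case
    using conjugate_products_append[of "rev (map (\<lambda>x. inv x) xs)" "[inv x]"] Cons.prems by auto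
qed simp

end

section \<open>Commutator length of integral chains\<close>

lemma cl_eq_Inf:
  "cl G gs = Inf {enat K | K. commutator_products G K \<inter> conjugate_products G gs \<noteq> {}}"
  unfolding cl_def commutator_products_def conjugate_products_def
  by (rule arg_cong[where f = Inf]) blast

lemma cl_antimono:
  "conjugate_products G xs \<subseteq> conjugate_products G ys \<Longrightarrow> cl G ys \<le> cl G xs"
  unfolding cl_eq_Inf by (rule Inf_superset_mono) blast

context group
begin

lemma cl_le_enat_iff:
  "cl G gs \<le> enat K \<longleftrightarrow> commutator_products G K \<inter> conjugate_products G gs \<noteq> {}"
proof
  assume "cl G gs \<le> enat K"
  moreover have "enat K < enat (Suc K)" by simp
  ultimately obtain K' where "enat K' < enat (Suc K)"
    and K': "commutator_products G K' \<inter> conjugate_products G gs \<noteq> {}"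
    unfolding cl_eq_Inf Inf_le_iff by blast
  then have "K' \<le> K" by simp
  then show "commutator_products G K \<inter> conjugate_products G gs \<noteq> {}"
    using K' commutator_products_mono by blast
next
  assume "commutator_products G K \<inter> conjugate_products G gs \<noteq> {}"
  then show "cl G gs \<le> enat K"
    unfolding cl_eq_Inf by (intro Inf_lower) blast
qed

lemma cl_le_enatI:
  "w \<in> commutator_products G K \<Longrightarrow> w \<in> conjugate_products G gs \<Longrightarrow> cl G gs \<le> enat K"
  unfolding cl_le_enat_iff by blast

lemma cl_le_enatE:
  assumes "cl G gs \<le> enat K"
  obtains w where "w \<in> commutator_products G K" "w \<in> conjugate_products G gs"
  using assms unfolding cl_le_enat_iff by blast

lemma cl_Nil: "cl G [] \<le> enat 0"
  by (rule cl_le_enatI) simp_all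

lemma cl_perm: "mset xs = mset ys \<Longrightarrow> set xs \<subseteq> carrier G \<Longrightarrow> cl G xs = cl G ys"
  unfolding cl_eq_Inf using conjugate_products_perm by simp

lemma cl_one_Cons: "set xs \<subseteq> carrier G \<Longrightarrow> cl G (\<one> # xs) = cl G xs"
  unfolding cl_eq_Inf using conjugate_products_one_Cons by simp

lemma cl_split_pow:
  "g \<in> carrier G \<Longrightarrow> set xs \<subseteq> carrier G \<Longrightarrow>
    cl G (g [^] (a::int) # g [^] (b::int) # xs) \<le> cl G (g [^] (a + b) # xs)"
  by (rule cl_antimono) (rule conjugate_products_split_pow)

lemma cl_append:
  assumes "set xs \<subseteq> carrier G" "set ys \<subseteq> carrier G"
    and "cl G xs \<le> enat K" "cl G ys \<le> enat K'"
  shows "cl G (xs @ ys) \<le> enat (K + K')"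
proof -
  obtain u v where "u \<in> commutator_products G K" "u \<in> conjugate_products G xs"
    "v \<in> commutator_products G K'" "v \<in> conjugate_products G ys"
    using assms(3,4) by (meson cl_le_enatE)
  then show ?thesis
    using cl_le_enatI[OF commutator_products_mult] conjugate_products_append[OF assms(1,2)] by blast
qed

lemma cl_le_of_prodl:
  "set xs \<subseteq> carrier G \<Longrightarrow> prodl G xs \<in> commutator_products G K \<Longrightarrow> cl G xs \<le> enat K"
  using cl_le_enatI prodl_in_conjugate_products by blast

lemma cl_rev_inv:
  assumes "set xs \<subseteq> carrier G" and "cl G xs \<le> enat K"
  shows "cl G (rev (map (\<lambda>x. inv x) xs)) \<le> enat K"
proof -
  obtain w where "w \<in> commutator_products G K" "w \<in> conjugate_products G xs"
    using assms(2) by (rule cl_le_enatE)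
  then show ?thesis
    using cl_le_enatI[OF commutator_products_inv] conjugate_products_rev_inv[OF assms(1)] by blast
qed

lemma cl_merge_pow:
  assumes g: "g \<in> carrier G" and xs: "set xs \<subseteq> carrier G"
    and "cl G (g [^] (a::int) # g [^] (b::int) # xs) \<le> enat K"
  shows "cl G (g [^] (a + b) # xs) \<le> enat (Suc K)"
proof -
  obtain w where w: "w \<in> commutator_products G K"
    and "w \<in> conjugate_products G (g [^] a # g [^] b # xs)"
    using assms(3) by (rule cl_le_enatE)
  then obtain t s z where w_eq: "w = t \<otimes> g [^] a \<otimes> inv t \<otimes> (s \<otimes> g [^] b \<otimes> inv s \<otimes> z)"
    and t: "t \<in> carrier G" and s: "s \<in> carrier G" and z: "z \<in> conjugate_products G xs"
    by (auto elim!: conjugate_products_ConsE)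
  have zc: "z \<in> carrier G" using conjugate_products_closed[OF xs z] .
  define X where "X = t \<otimes> g [^] a \<otimes> inv t"
  define Y where "Y = t \<otimes> g [^] b \<otimes> inv t"
  define u where "u = s \<otimes> inv t"
  have XYu: "X \<in> carrier G" "Y \<in> carrier G" "u \<in> carrier G"
    using g t s by (simp_all add: X_def Y_def u_def)
  define C where "C = commutator G (X \<otimes> u \<otimes> inv X) (X \<otimes> Y \<otimes> inv X)"
  have C: "C \<in> carrier G" using XYu by (simp add: C_def)
  define w' where "w' = t \<otimes> g [^] (a + b) \<otimes> inv t \<otimes> z"
  \<comment> \<open>X (u Y u^-1) = [X u X^-1, X Y X^-1] X Y, and X Y is the conjugate of g^(a+b) by t\<close>
  have "w = C \<otimes> w'"
  proof -
    have "s \<otimes> g [^] b \<otimes> inv s = u \<otimes> Y \<otimes> inv u"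
      using g t s by (simp add: u_def Y_def m_assoc inv_mult_group)
    then have "w = X \<otimes> (u \<otimes> Y \<otimes> inv u) \<otimes> z"
      using w_eq XYu zc by (simp add: X_def m_assoc)
    also have "\<dots> = C \<otimes> (X \<otimes> Y) \<otimes> z"
      using XYu by (simp add: C_def commutator_def m_assoc inv_mult_group)
    also have "X \<otimes> Y = t \<otimes> g [^] (a + b) \<otimes> inv t"
      using g t by (simp add: X_def Y_def m_assoc int_pow_mult)
    finally show ?thesis
      using g t zc C by (simp add: w'_def m_assoc)
  qed
  then have "w' = inv C \<otimes> w"
    using C g t zc by (simp add: w'_def)
  moreover have "C \<in> commutator_products G 1"
    unfolding C_def by (rule commutator_in_commutator_products) (use XYu in simp)+
  then have "inv C \<otimes> w \<in> commutator_products G (1 + K)"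
    using commutator_products_mult[OF _ w] commutator_products_inv by blast
  moreover have "w' \<in> conjugate_products G (g [^] (a + b) # xs)"
    unfolding w'_def using t z by (rule conjugate_products_ConsI)
  ultimately show ?thesis
    using cl_le_enatI by simp
qed

lemma conjugate_products_map_pow:
  assumes "set xs \<subseteq> carrier G" and "z \<in> conjugate_products G xs"
  obtains w where "w \<in> commutator_products G (length xs * (n div 2))"
    and "w \<otimes> z [^] (n::nat) \<in> conjugate_products G (map (\<lambda>x. x [^] n) xs)"
  using assms
proof (induction xs arbitrary: z thesis)
  case Nil
  then show ?case by force
next
  case (Cons x xs)
  obtain t z0 where z: "z = t \<otimes> x \<otimes> inv t \<otimes> z0" and t: "t \<in> carrier G"
    and z0: "z0 \<in> conjugate_products G xs"
    using Cons.prems(3) by (rule conjugate_products_ConsE)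
  have x: "x \<in> carrier G" and xs: "set xs \<subseteq> carrier G" using Cons.prems by auto
  obtain w0 where w0: "w0 \<in> commutator_products G (length xs * (n div 2))"
    and w0z0: "w0 \<otimes> z0 [^] n \<in> conjugate_products G (map (\<lambda>x. x [^] n) xs)"
    using Cons.IH[OF _ xs z0] by blast
  define X where "X = t \<otimes> x \<otimes> inv t"
  have X: "X \<in> carrier G" using x t by (simp add: X_def)
  have z0c: "z0 \<in> carrier G" using conjugate_products_closed[OF xs z0] .
  have w0c: "w0 \<in> carrier G" using commutator_products_closed[OF w0] .
  \<comment> \<open>(X z0)^n differs from X^n z0^n by a pants element\<close>
  define W where "W = X [^] n \<otimes> z0 [^] n \<otimes> inv ((X \<otimes> z0) [^] n)"
  have W: "W \<in> commutator_products G (n div 2)"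
    unfolding W_def using pants_in_commutator_products[OF X z0c] .
  define w where "w = (X [^] n \<otimes> w0 \<otimes> inv (X [^] n)) \<otimes> W"
  have "w \<in> commutator_products G (length xs * (n div 2) + n div 2)"
    unfolding w_def using commutator_products_mult commutator_products_conj w0 W X by simp
  then have "w \<in> commutator_products G (length (x # xs) * (n div 2))"
    by (simp add: add.commute)
  moreover have "t \<otimes> x [^] n \<otimes> inv t \<otimes> (w0 \<otimes> z0 [^] n) \<in> conjugate_products G (map (\<lambda>x. x [^] n) (x # xs))"
    using conjugate_products_ConsI[OF t w0z0] by simp
  moreover have "t \<otimes> x [^] n \<otimes> inv t \<otimes> (w0 \<otimes> z0 [^] n) = w \<otimes> z [^] n"
  proof -
    have "t \<otimes> x [^] n \<otimes> inv t = X [^] n" using conj_nat_pow t x by (simp add: X_def)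
    moreover have "z = X \<otimes> z0" using z by (simp add: X_def)
    ultimately show ?thesis
      using X z0c w0c by (simp add: w_def W_def m_assoc)
  qed
  ultimately show ?case using Cons.prems(1) by metis
qed

lemma cl_map_pow:
  assumes "set xs \<subseteq> carrier G" and "cl G xs \<le> enat K"
  shows "cl G (map (\<lambda>x. x [^] (n::nat)) xs) \<le> enat (length xs * (n div 2) + n * K)"
proof -
  obtain z where z: "z \<in> commutator_products G K" "z \<in> conjugate_products G xs"
    using assms(2) by (rule cl_le_enatE)
  obtain w where w: "w \<in> commutator_products G (length xs * (n div 2))"
    and wz: "w \<otimes> z [^] n \<in> conjugate_products G (map (\<lambda>x. x [^] n) xs)"
    using conjugate_products_map_pow[OF assms(1) z(2)] by blast
  show ?thesis
    using commutator_products_mult[OF w commutator_products_pow[OF z(1)]] wz by (rule cl_le_enatI)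
qed

lemma cl_pants:
  "g \<in> carrier G \<Longrightarrow> h \<in> carrier G \<Longrightarrow>
    cl G [g [^] (n::nat), h [^] n, inv ((g \<otimes> h) [^] n)] \<le> enat (n div 2)"
  using cl_le_of_prodl[of "[g [^] n, h [^] n, inv ((g \<otimes> h) [^] n)]"] pants_in_commutator_products
  by (simp add: m_assoc)

end

text \<open>A list of pairs \<open>(g, e)\<close> encodes the integral chain \<open>\<Sum> e \<cdot> g\<close>; \<open>chain_powers G m s\<close>
  lists the elements \<open>g\<^sup>e\<^sup>m\<close>, so its commutator length is that of \<open>m\<close> times the chain.\<close>

definition chain_powers :: "('a, 'b) monoid_scheme \<Rightarrow> int \<Rightarrow> ('a \<times> int) list \<Rightarrow> 'a list" where
  "chain_powers G m s = map (\<lambda>(g, e). g [^]\<^bsub>G\<^esub> (e * m)) s"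

definition chain_coeff :: "('a \<times> int) list \<Rightarrow> 'a \<Rightarrow> int" where
  "chain_coeff s y = sum_list (map (\<lambda>(g, e). if g = y then e else 0) s)"

lemma chain_powers_Nil [simp]: "chain_powers G m [] = []"
  by (simp add: chain_powers_def)

lemma chain_powers_Cons [simp]: "chain_powers G m ((g, e) # s) = g [^]\<^bsub>G\<^esub> (e * m) # chain_powers G m s"
  by (simp add: chain_powers_def)

lemma chain_powers_append [simp]: "chain_powers G m (s @ s') = chain_powers G m s @ chain_powers G m s'"
  by (simp add: chain_powers_def)

lemma length_chain_powers [simp]: "length (chain_powers G m s) = length s"
  by (simp add: chain_powers_def)

lemma chain_coeff_Nil [simp]: "chain_coeff [] y = 0"
  by (simp add: chain_coeff_def)

lemma chain_coeff_Cons [simp]: "chain_coeff ((g, e) # s) y = (if g = y then e else 0) + chain_coeff s y"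
  by (simp add: chain_coeff_def)

lemma chain_coeff_append [simp]: "chain_coeff (s @ s') y = chain_coeff s y + chain_coeff s' y"
  by (simp add: chain_coeff_def)

lemma chain_coeff_eq_sum_filter: "chain_coeff s g = sum_list (map snd (filter (\<lambda>p. fst p = g) s))"
  by (induction s) auto

lemma chain_coeff_filter_neq:
  "chain_coeff (filter (\<lambda>p. fst p \<noteq> g) s) y = (if y = g then 0 else chain_coeff s y)"
  by (induction s) auto

lemma chain_coeff_replicate: "chain_coeff (concat (replicate n s)) y = int n * chain_coeff s y"
  by (induction n) (auto simp: algebra_simps)

lemma chain_coeff_rev_neg: "chain_coeff (rev (map (\<lambda>(g, e). (g, - e)) s)) y = - chain_coeff s y"
  by (induction s) auto

context group
begin

lemma chain_powers_closed: "fst ` set s \<subseteq> carrier G \<Longrightarrow> set (chain_powers G m s) \<subseteq> carrier G"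
  by (auto simp: chain_powers_def)

lemma map_pow_chain_powers:
  "fst ` set s \<subseteq> carrier G \<Longrightarrow> map (\<lambda>x. x [^] (n::nat)) (chain_powers G 1 s) = chain_powers G (int n) s"
  by (auto simp: chain_powers_def int_pow_pow simp flip: int_pow_int)

lemma cl_merge_chain:
  assumes g: "g \<in> carrier G" and xs: "set xs \<subseteq> carrier G" and s: "\<forall>p \<in> set s. fst p = g"
    and "cl G (chain_powers G m s @ xs) \<le> enat K"
  shows "cl G (g [^] (sum_list (map snd s) * m) # xs) \<le> enat (K + length s)"
  using xs s assms(4)
proof (induction s arbitrary: xs K)
  case Nil
  then show ?case using cl_one_Cons by simp
next
  case (Cons p s)
  obtain e where p: "p = (g, e)" using Cons.prems(2) by (cases p) auto
  have ge: "g [^] (e * m) \<in> carrier G" using g by simp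
  have "cl G (chain_powers G m s @ xs @ [g [^] (e * m)]) = cl G (chain_powers G m (p # s) @ xs)"
    using Cons.prems(1,2) g by (intro cl_perm) (auto simp: p chain_powers_def)
  then have "cl G (g [^] (sum_list (map snd s) * m) # xs @ [g [^] (e * m)]) \<le> enat (K + length s)"
    using Cons.IH[of "xs @ [g [^] (e * m)]"] Cons.prems ge by auto
  moreover have "cl G (g [^] (sum_list (map snd s) * m) # g [^] (e * m) # xs) =
      cl G (g [^] (sum_list (map snd s) * m) # xs @ [g [^] (e * m)])"
    using Cons.prems(1) g by (intro cl_perm) auto
  ultimately have "cl G (g [^] (sum_list (map snd s) * m + e * m) # xs) \<le> enat (Suc (K + length s))"
    using cl_merge_pow[OF g Cons.prems(1)] by simp
  then show ?case by (simp add: p algebra_simps)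
qed

lemma cl_split_chain:
  assumes g: "g \<in> carrier G" and xs: "set xs \<subseteq> carrier G" and s: "\<forall>p \<in> set s. fst p = g"
    and "cl G (g [^] (sum_list (map snd s) * m) # xs) \<le> enat K"
  shows "cl G (chain_powers G m s @ xs) \<le> enat K"
  using xs s assms(4)
proof (induction s arbitrary: xs)
  case Nil
  then show ?case using cl_one_Cons by simp
next
  case (Cons p s)
  obtain e where p: "p = (g, e)" using Cons.prems(2) by (cases p) auto
  have ge: "g [^] (e * m) \<in> carrier G" using g by simp
  have "cl G (g [^] (e * m) # g [^] (sum_list (map snd s) * m) # xs) \<le>
      cl G (g [^] (e * m + sum_list (map snd s) * m) # xs)"
    by (rule cl_split_pow[OF g Cons.prems(1)])
  also have "e * m + sum_list (map snd s) * m = sum_list (map snd (p # s)) * m"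
    by (simp add: p algebra_simps)
  finally have "cl G (g [^] (e * m) # g [^] (sum_list (map snd s) * m) # xs) \<le> enat K"
    using Cons.prems(3) by (rule order_trans)
  moreover have "cl G (g [^] (e * m) # g [^] (sum_list (map snd s) * m) # xs) =
      cl G (g [^] (sum_list (map snd s) * m) # xs @ [g [^] (e * m)])"
    using Cons.prems(1) g by (intro cl_perm) auto
  ultimately have "cl G (chain_powers G m s @ xs @ [g [^] (e * m)]) \<le> enat K"
    using Cons.IH[of "xs @ [g [^] (e * m)]"] Cons.prems ge by auto
  moreover have "cl G (chain_powers G m s @ xs @ [g [^] (e * m)]) = cl G (chain_powers G m (p # s) @ xs)"
    using Cons.prems(1,2) g by (intro cl_perm) (auto simp: p chain_powers_def)
  ultimately show ?case by simp
qed

lemma cl_chain_powers_same_base: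
  assumes g: "g \<in> carrier G" and xs: "set xs \<subseteq> carrier G"
    and s: "\<forall>p \<in> set s. fst p = g" and s': "\<forall>p \<in> set s'. fst p = g"
    and sum: "sum_list (map snd s) = sum_list (map snd s')"
    and "cl G (chain_powers G m s' @ xs) \<le> enat K"
  shows "cl G (chain_powers G m s @ xs) \<le> enat (K + length s')"
proof (rule cl_split_chain[OF g xs s])
  show "cl G (g [^] (sum_list (map snd s) * m) # xs) \<le> enat (K + length s')"
    using cl_merge_chain[OF g xs s' assms(6)] sum by simp
qed

lemma cl_chain_powers_coeff_eq:
  assumes "fst ` set s \<subseteq> carrier G" "fst ` set s' \<subseteq> carrier G" "chain_coeff s = chain_coeff s'"
    and "set xs \<subseteq> carrier G" and "cl G (chain_powers G m s' @ xs) \<le> enat K"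
  shows "cl G (chain_powers G m s @ xs) \<le> enat (K + length s')"
  using assms
proof (induction "length s + length s'" arbitrary: s s' xs K rule: less_induct)
  case less
  show ?case
  proof (cases "s @ s' = []")
    case True
    then show ?thesis using less.prems by simp
  next
    case False
    \<comment> \<open>treat the terms with the first base \<open>g\<close> at once, and the others by induction\<close>
    define g where "g = fst (hd (s @ s'))"
    have g_mem: "g \<in> fst ` set (s @ s')"
      using False unfolding g_def by (cases "s @ s'") auto
    have g: "g \<in> carrier G" using g_mem less.prems(1,2) by auto
    define sg where "sg = filter (\<lambda>p. fst p = g) s"
    define so where "so = filter (\<lambda>p. fst p \<noteq> g) s"
    define sg' where "sg' = filter (\<lambda>p. fst p = g) s'"
    define so' where "so' = filter (\<lambda>p. fst p \<noteq> g) s'"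
    have shorter: "length so + length so' < length s + length s'"
    proof -
      have "length so \<le> length s" "length so' \<le> length s'"
        unfolding so_def so'_def by simp_all
      moreover have "length so < length s \<or> length so' < length s'"
        using g_mem unfolding so_def so'_def by (auto intro!: length_filter_less)
      ultimately show ?thesis by linarith
    qed
    have closed: "fst ` set sg \<subseteq> carrier G" "fst ` set so \<subseteq> carrier G"
      "fst ` set sg' \<subseteq> carrier G" "fst ` set so' \<subseteq> carrier G"
      using less.prems(1,2) unfolding sg_def so_def sg'_def so'_def by auto
    note powers_closed = chain_powers_closed[OF closed(1), of m] chain_powers_closed[OF closed(2), of m]
      chain_powers_closed[OF closed(3), of m] chain_powers_closed[OF closed(4), of m]
    have "mset (chain_powers G m s) = mset (chain_powers G m sg) + mset (chain_powers G m so)"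
      unfolding sg_def so_def by (induction s) auto
    moreover have "mset (chain_powers G m s') = mset (chain_powers G m sg') + mset (chain_powers G m so')"
      unfolding sg'_def so'_def by (induction s') auto
    ultimately have perm: "cl G (chain_powers G m s @ xs) = cl G (chain_powers G m sg @ chain_powers G m so @ xs)"
      "cl G (chain_powers G m s' @ xs) = cl G (chain_powers G m so' @ chain_powers G m sg' @ xs)"
      "cl G (chain_powers G m so @ chain_powers G m sg' @ xs) = cl G (chain_powers G m sg' @ chain_powers G m so @ xs)"
      using chain_powers_closed[OF less.prems(1), of m] chain_powers_closed[OF less.prems(2), of m]
        powers_closed less.prems(4)
      by (auto intro!: cl_perm)
    have "chain_coeff so = chain_coeff so'"
      using less.prems(3) unfolding so_def so'_def by (auto simp: fun_eq_iff chain_coeff_filter_neq)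
    then have "cl G (chain_powers G m so @ chain_powers G m sg' @ xs) \<le> enat (K + length so')"
      using less.hyps[OF shorter closed(2,4)] less.prems(4,5) powers_closed perm(2) by simp
    moreover have "sum_list (map snd sg) = sum_list (map snd sg')"
      unfolding sg_def sg'_def chain_coeff_eq_sum_filter[symmetric] using less.prems(3) by simp
    ultimately have "cl G (chain_powers G m sg @ chain_powers G m so @ xs) \<le> enat (K + length so' + length sg')"
      using cl_chain_powers_same_base[OF g _ _ _ _ ] powers_closed less.prems(4) perm(3)
      unfolding sg_def sg'_def by simp
    moreover have "K + length so' + length sg' = K + length s'"
      using sum_length_filter_compl[of "\<lambda>p. fst p = g" s'] unfolding sg'_def so'_def by simp
    ultimately show ?thesis
      using perm(1) by simp
  qed
qed

lemma cl_chain_powers_replicate: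
  assumes "fst ` set s \<subseteq> carrier G" and "cl G (chain_powers G m s) \<le> enat c"
  shows "cl G (chain_powers G m (concat (replicate n s))) \<le> enat (n * c)"
proof (induction n)
  case 0
  then show ?case using cl_Nil by (simp add: chain_powers_def)
next
  case (Suc n)
  have "set (chain_powers G m (concat (replicate n s))) \<subseteq> carrier G"
    using assms(1) by (intro chain_powers_closed) fastforce
  then show ?case
    using cl_append[OF chain_powers_closed[OF assms(1)] _ assms(2) Suc.IH] by simp
qed

lemma cl_chain_powers_rev_neg:
  assumes "fst ` set s \<subseteq> carrier G" and "cl G (chain_powers G 1 s) \<le> enat c"
  shows "cl G (chain_powers G 1 (rev (map (\<lambda>(g, e). (g, - e)) s))) \<le> enat c"
proof -
  have "chain_powers G 1 (rev (map (\<lambda>(g, e). (g, - e)) s)) = rev (map (\<lambda>x. inv x) (chain_powers G 1 s))"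
    using assms(1) by (auto simp: chain_powers_def rev_map int_pow_neg)
  then show ?thesis
    using cl_rev_inv[OF chain_powers_closed[OF assms(1)] assms(2)] by simp
qed

end

lemma scl_le_of_cl_le:
  assumes "\<And>n. 0 < n \<Longrightarrow> cl G (map (\<lambda>g. g [^]\<^bsub>G\<^esub> n) xs) \<le> enat (n * A + B)"
  shows "scl G xs \<le> ereal (real A)"
proof -
  define b where "b n = ereal (real A + real B / real n)" for n :: nat
  have "eventually (\<lambda>n. ereal_of_enat (cl G (map (\<lambda>g. g [^]\<^bsub>G\<^esub> n) xs)) / ereal (real n) \<le> b n) sequentially"
    unfolding eventually_sequentially
  proof (intro exI[of _ 1] allI impI)
    fix n :: nat assume "1 \<le> n"
    then obtain k where k: "cl G (map (\<lambda>g. g [^]\<^bsub>G\<^esub> n) xs) = enat k" "k \<le> n * A + B"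
      using assms[of n] by (cases "cl G (map (\<lambda>g. g [^]\<^bsub>G\<^esub> n) xs)") auto
    then have "real k \<le> real (n * A + B)"
      by (simp only: of_nat_le_iff)
    then have "real k / real n \<le> real (n * A + B) / real n"
      by (rule divide_right_mono) simp
    also have "\<dots> = real A + real B / real n"
      using \<open>1 \<le> n\<close> by (simp add: field_simps)
    finally show "ereal_of_enat (cl G (map (\<lambda>g. g [^]\<^bsub>G\<^esub> n) xs)) / ereal (real n) \<le> b n"
      using k \<open>1 \<le> n\<close> by (simp add: b_def)
  qed
  then have "scl G xs \<le> Liminf sequentially b"
    unfolding scl_def by (rule Liminf_mono)
  also have "Liminf sequentially b = ereal (real A)"
    unfolding b_def
    by (intro lim_imp_Liminf) (auto intro!: tendsto_eq_intros lim_const_over_n simp: lim_ereal)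
  finally show ?thesis .
qed

lemma cl_pow_le_of_scl_le:
  assumes scl: "scl G xs \<le> ereal L" and "0 < \<epsilon>"
  obtains n c where "N < n" and "cl G (map (\<lambda>g. g [^]\<^bsub>G\<^esub> n) xs) = enat c" and "real c / real n < L + \<epsilon>"
proof -
  define a where "a n = ereal_of_enat (cl G (map (\<lambda>g. g [^]\<^bsub>G\<^esub> n) xs)) / ereal (real n)" for n :: nat
  have "frequently (\<lambda>n. a n < ereal (L + \<epsilon>)) sequentially"
  proof (rule ccontr)
    assume "\<not> frequently (\<lambda>n. a n < ereal (L + \<epsilon>)) sequentially"
    then have "eventually (\<lambda>n. ereal (L + \<epsilon>) \<le> a n) sequentially"
      by (simp add: not_frequently not_less)
    then have "ereal (L + \<epsilon>) \<le> scl G xs"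
      unfolding scl_def a_def by (rule Liminf_bounded)
    then have "ereal (L + \<epsilon>) \<le> ereal L"
      using scl by (rule order_trans)
    then show False using \<open>0 < \<epsilon>\<close> by simp
  qed
  moreover have "eventually (\<lambda>n. N < n) sequentially"
    by (rule eventually_gt_at_top)
  ultimately obtain n where n: "a n < ereal (L + \<epsilon>)" "N < n"
    using frequently_ex[OF frequently_eventually_conj] by blast
  moreover obtain c where "cl G (map (\<lambda>g. g [^]\<^bsub>G\<^esub> n) xs) = enat c"
    using n by (cases "cl G (map (\<lambda>g. g [^]\<^bsub>G\<^esub> n) xs)") (auto simp: a_def)
  ultimately show thesis
    using that by (auto simp: a_def)
qed

context group
begin

lemma scl_chain_powers_le:
  assumes s: "fst ` set s \<subseteq> carrier G" and s': "fst ` set s' \<subseteq> carrier G"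
    and coeff: "chain_coeff s' = chain_coeff s" and cl: "cl G (chain_powers G 1 s) \<le> enat c"
  shows "scl G (chain_powers G 1 s') \<le> ereal (real (c + length s))"
proof (rule scl_le_of_cl_le)
  fix n :: nat assume "0 < n"
  have "cl G (map (\<lambda>x. x [^] n) (chain_powers G 1 s)) \<le> enat (length s * (n div 2) + n * c)"
    using cl_map_pow[OF chain_powers_closed[OF s] cl] by simp
  then have "cl G (chain_powers G (int n) s @ []) \<le> enat (length s * (n div 2) + n * c)"
    using map_pow_chain_powers[OF s] by simp
  then have "cl G (chain_powers G (int n) s' @ []) \<le> enat (length s * (n div 2) + n * c + length s)"
    using cl_chain_powers_coeff_eq[OF s' s coeff, of "[]"] by simp
  moreover have "length s * (n div 2) + n * c + length s \<le> n * (c + length s) + length s"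
    by (simp add: algebra_simps)
  ultimately show "cl G (map (\<lambda>x. x [^] n) (chain_powers G 1 s')) \<le> enat (n * (c + length s) + length s)"
    using map_pow_chain_powers[OF s'] by (simp add: order_trans)
qed

end

lemma le_of_forall_le_plus_div:
  fixes x a C :: real
  assumes "\<And>k::nat. 0 < k \<Longrightarrow> x \<le> a + C / real k"
  shows "x \<le> a"
proof (rule ccontr)
  assume "\<not> x \<le> a"
  obtain k :: nat where k: "\<bar>C\<bar> / (x - a) < real k"
    using reals_Archimedean2 by blast
  moreover have "0 \<le> \<bar>C\<bar> / (x - a)"
    using \<open>\<not> x \<le> a\<close> by simp
  ultimately have "0 < k"
    by (metis le_less_trans of_nat_0_less_iff)
  have "C < (x - a) * real k"
    using k \<open>\<not> x \<le> a\<close> abs_ge_self[of C] by (simp add: field_simps)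
  then have "a + C / real k < x"
    using \<open>0 < k\<close> by (simp add: field_simps)
  with assms[OF \<open>0 < k\<close>] show False by simp
qed

lemma defect_bound:
  "quasimorphism G \<phi> \<Longrightarrow> a \<in> carrier G \<Longrightarrow> b \<in> carrier G \<Longrightarrow>
    \<bar>\<phi> a + \<phi> b - \<phi> (a \<otimes>\<^bsub>G\<^esub> b)\<bar> \<le> defect G \<phi>"
  unfolding quasimorphism_def defect_def by (rule cSup_upper) (auto simp: defect_set_def)

lemma defect_le:
  assumes "\<And>a b. a \<in> carrier G \<Longrightarrow> b \<in> carrier G \<Longrightarrow> \<bar>\<phi> a + \<phi> b - \<phi> (a \<otimes>\<^bsub>G\<^esub> b)\<bar> \<le> C"
    and "carrier G \<noteq> {}"
  shows "quasimorphism G \<phi>" and "defect G \<phi> \<le> C"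
proof -
  show "quasimorphism G \<phi>"
    unfolding quasimorphism_def defect_set_def bdd_above_def using assms(1) by blast
  have "defect_set G \<phi> \<noteq> {}"
    using assms(2) unfolding defect_set_def by blast
  then show "defect G \<phi> \<le> C"
    unfolding defect_def by (rule cSup_least) (auto simp: defect_set_def assms(1))
qed

lemma defect_set_subset_hom:
  assumes "monoid G" and "f \<in> hom G H" and "\<And>g. g \<in> carrier G \<Longrightarrow> \<psi> (f g) = \<phi> g"
  shows "defect_set G \<phi> \<subseteq> defect_set H \<psi>"
proof
  fix x assume "x \<in> defect_set G \<phi>"
  then obtain g h where x: "x = \<bar>\<phi> g + \<phi> h - \<phi> (g \<otimes>\<^bsub>G\<^esub> h)\<bar>" and gh: "g \<in> carrier G" "h \<in> carrier G"
    unfolding defect_set_def by blast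
  then have "g \<otimes>\<^bsub>G\<^esub> h \<in> carrier G" "f (g \<otimes>\<^bsub>G\<^esub> h) = f g \<otimes>\<^bsub>H\<^esub> f h"
    using assms(1,2) by (auto simp: hom_def monoid.m_closed)
  then have "x = \<bar>\<psi> (f g) + \<psi> (f h) - \<psi> (f g \<otimes>\<^bsub>H\<^esub> f h)\<bar>"
    using x gh assms(3) by metis
  then show "x \<in> defect_set H \<psi>"
    unfolding defect_set_def using gh assms(2) by (auto simp: hom_def)
qed

lemma defect_le_of_extends:
  assumes "monoid G" and "f \<in> hom G H" and "quasimorphism H \<psi>"
    and "\<And>g. g \<in> carrier G \<Longrightarrow> \<psi> (f g) = \<phi> g"
  shows "defect G \<phi> \<le> defect H \<psi>"
proof -
  have "defect_set G \<phi> \<noteq> {}"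
    using monoid.one_closed[OF assms(1)] unfolding defect_set_def by blast
  moreover have "bdd_above (defect_set H \<psi>)"
    using assms(3) unfolding quasimorphism_def .
  ultimately show ?thesis
    unfolding defect_def using defect_set_subset_hom[where \<psi> = \<psi> and \<phi> = \<phi>, OF assms(1,2,4)]
    by (rule cSup_subset_mono)
qed

lemma Qm_comp_hom:
  assumes "group G" "group H" "f \<in> hom G H" "\<psi> \<in> Qm H"
  shows "\<psi> \<circ> f \<in> Qm G"
proof -
  have "quasimorphism G (\<psi> \<circ> f)"
    using assms(4) defect_set_subset_hom[OF group.is_monoid[OF assms(1)] assms(3), of "\<psi>" "\<psi> \<circ> f"]
    unfolding Qm_def quasimorphism_def by (auto intro: bdd_above_mono)
  moreover have "homogeneous G (\<psi> \<circ> f)"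
    using assms hom_int_pow[OF assms(3) _ assms(1,2)] unfolding Qm_def homogeneous_def
    by (auto simp: hom_def)
  ultimately show ?thesis by (simp add: Qm_def)
qed

lemma Homr_comp_hom: "f \<in> hom G H \<Longrightarrow> \<psi> \<in> Homr H \<Longrightarrow> \<psi> \<circ> f \<in> Homr G"
  by (auto simp: Homr_def hom_def)

context group
begin

lemma homogeneous_one: "homogeneous G \<phi> \<Longrightarrow> \<phi> \<one> = 0"
  unfolding homogeneous_def by (metis int_pow_0 mult_zero_left of_int_0 one_closed)

lemma homogeneous_inv: "homogeneous G \<phi> \<Longrightarrow> g \<in> carrier G \<Longrightarrow> \<phi> (inv g) = - \<phi> g"
  unfolding homogeneous_def using int_pow_neg[of g 1] by (metis int_pow_1 mult_minus1 of_int_1 of_int_minus)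

lemma homogeneous_nat_pow: "homogeneous G \<phi> \<Longrightarrow> g \<in> carrier G \<Longrightarrow> \<phi> (g [^] (n::nat)) = real n * \<phi> g"
  unfolding homogeneous_def by (metis int_pow_int of_int_of_nat_eq)

end

locale homogeneous_quasimorphism = group G for G (structure) +
  fixes \<phi> :: "'a \<Rightarrow> real"
  assumes quasimorphism: "quasimorphism G \<phi>" and homogeneous: "homogeneous G \<phi>"
begin

lemma mult_le: "a \<in> carrier G \<Longrightarrow> b \<in> carrier G \<Longrightarrow> \<phi> (a \<otimes> b) \<le> \<phi> a + \<phi> b + defect G \<phi>"
  using defect_bound[OF quasimorphism, of a b] by linarith

lemma mult_ge: "a \<in> carrier G \<Longrightarrow> b \<in> carrier G \<Longrightarrow> \<phi> a + \<phi> b - defect G \<phi> \<le> \<phi> (a \<otimes> b)"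
  using defect_bound[OF quasimorphism, of a b] by linarith

lemma defect_nonneg: "0 \<le> defect G \<phi>"
  using defect_bound[OF quasimorphism one_closed one_closed] homogeneous_one[OF homogeneous] by simp

lemma conj_invariant:
  assumes t: "t \<in> carrier G" and x: "x \<in> carrier G"
  shows "\<phi> (t \<otimes> x \<otimes> inv t) = \<phi> x"
proof -
  define d where "d = \<phi> (t \<otimes> x \<otimes> inv t) - \<phi> x"
  \<comment> \<open>\<open>(t x t\<inverse>)\<^sup>n = t x\<^sup>n t\<inverse>\<close>, so \<open>n d\<close> is bounded by two defects\<close>
  have "\<bar>d\<bar> \<le> 0 + 2 * defect G \<phi> / real n" if "0 < n" for n :: nat
  proof -
    have "\<phi> ((t \<otimes> x \<otimes> inv t) [^] n) = \<phi> (t \<otimes> (x [^] n \<otimes> inv t))"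
      using conj_nat_pow t x by (simp add: m_assoc)
    moreover have "\<bar>\<phi> (t \<otimes> (x [^] n \<otimes> inv t)) - \<phi> (x [^] n)\<bar> \<le> 2 * defect G \<phi>"
      using mult_le[of t "x [^] n \<otimes> inv t"] mult_ge[of t "x [^] n \<otimes> inv t"]
        mult_le[of "x [^] n" "inv t"] mult_ge[of "x [^] n" "inv t"]
        homogeneous_inv[OF homogeneous t] t x by (simp add: abs_le_iff)
    moreover have "real n * \<bar>d\<bar> = \<bar>real n * \<phi> (t \<otimes> x \<otimes> inv t) - real n * \<phi> x\<bar>"
      by (simp add: d_def abs_mult flip: right_diff_distrib)
    ultimately have "real n * \<bar>d\<bar> \<le> 2 * defect G \<phi>"
      using homogeneous_nat_pow[OF homogeneous] t x by simp
    then show ?thesis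
      using that by (simp add: field_simps)
  qed
  then have "\<bar>d\<bar> \<le> 0"
    by (rule le_of_forall_le_plus_div)
  then show ?thesis by (simp add: d_def)
qed

lemma commutator_le:
  assumes "a \<in> carrier G" "b \<in> carrier G"
  shows "\<phi> (commutator G a b) \<le> defect G \<phi>"
proof -
  have "\<phi> (commutator G a b) \<le> \<phi> (a \<otimes> b \<otimes> inv a) + \<phi> (inv b) + defect G \<phi>"
    unfolding commutator_def using mult_le assms by simp
  then show ?thesis
    using conj_invariant homogeneous_inv[OF homogeneous] assms by simp
qed

lemma commutator_products_le:
  "z \<in> commutator_products G K \<Longrightarrow> \<phi> z \<le> 2 * real K * defect G \<phi>"
proof (induction K arbitrary: z)
  case 0
  then show ?case using homogeneous_one[OF homogeneous] by simp
next
  case (Suc K)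
  then obtain a b w where "z = commutator G a b \<otimes> w" "a \<in> carrier G" "b \<in> carrier G"
    and w: "w \<in> commutator_products G K"
    by (auto simp: commutator_products_Suc)
  then have "\<phi> z \<le> \<phi> (commutator G a b) + \<phi> w + defect G \<phi>"
    using mult_le commutator_products_closed by simp
  also have "\<dots> \<le> defect G \<phi> + 2 * real K * defect G \<phi> + defect G \<phi>"
    using commutator_le \<open>a \<in> carrier G\<close> \<open>b \<in> carrier G\<close> Suc.IH[OF w] by (intro add_mono) auto
  finally show ?case by (simp add: algebra_simps)
qed

lemma conjugate_products_ge:
  "set xs \<subseteq> carrier G \<Longrightarrow> z \<in> conjugate_products G xs \<Longrightarrow>
    sum_list (map \<phi> xs) \<le> \<phi> z + real (length xs) * defect G \<phi>"
proof (induction xs arbitrary: z)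
  case Nil
  then show ?case using homogeneous_one[OF homogeneous] by simp
next
  case (Cons x xs)
  obtain t w where z: "z = t \<otimes> x \<otimes> inv t \<otimes> w" and t: "t \<in> carrier G"
    and w: "w \<in> conjugate_products G xs"
    using Cons.prems(2) by (rule conjugate_products_ConsE)
  have x: "x \<in> carrier G" and xs: "set xs \<subseteq> carrier G" using Cons.prems(1) by auto
  have "\<phi> (t \<otimes> x \<otimes> inv t) + \<phi> w - defect G \<phi> \<le> \<phi> z"
    using mult_ge[of "t \<otimes> x \<otimes> inv t" w] z t x conjugate_products_closed[OF xs w] by simp
  then show ?case
    using conj_invariant[OF t x] Cons.IH[OF xs w] by (simp add: algebra_simps)
qed

lemma sum_le_cl:
  "set xs \<subseteq> carrier G \<Longrightarrow> cl G xs \<le> enat K \<Longrightarrow>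
    sum_list (map \<phi> xs) \<le> (2 * real K + real (length xs)) * defect G \<phi>"
  by (elim cl_le_enatE) (auto dest!: commutator_products_le conjugate_products_ge simp: algebra_simps)

lemma sum_le_cl_map_pow:
  assumes xs: "set xs \<subseteq> carrier G" and "cl G (map (\<lambda>g. g [^] n) xs) \<le> enat c" and "0 < n"
  shows "sum_list (map \<phi> xs) \<le> 2 * defect G \<phi> * (real c / real n) + real (length xs) * defect G \<phi> / real n"
proof -
  have "real n * sum_list (map \<phi> xs) = sum_list (map \<phi> (map (\<lambda>g. g [^] n) xs))"
    using xs by (induction xs) (auto simp: homogeneous_nat_pow[OF homogeneous] algebra_simps)
  also have "\<dots> \<le> (2 * real c + real (length xs)) * defect G \<phi>"
    using sum_le_cl[OF _ assms(2)] xs by auto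
  finally show ?thesis
    using \<open>0 < n\<close> by (simp add: field_simps)
qed

lemma sum_le_scl:
  assumes xs: "set xs \<subseteq> carrier G" and scl: "scl G xs \<le> ereal L"
  shows "sum_list (map \<phi> xs) \<le> 2 * defect G \<phi> * L"
proof (rule field_le_epsilon)
  fix e :: real assume "0 < e"
  define D where "D = defect G \<phi>"
  have "0 \<le> D" unfolding D_def by (rule defect_nonneg)
  define \<epsilon> where "\<epsilon> = e / (2 * D + 1)"
  have "0 < \<epsilon>" using \<open>0 < e\<close> \<open>0 \<le> D\<close> by (simp add: \<epsilon>_def)
  have "2 * D * \<epsilon> + \<epsilon> = (2 * D + 1) * \<epsilon>"
    by (simp add: algebra_simps)
  also have "\<dots> = e"
    using \<open>0 \<le> D\<close> by (simp add: \<epsilon>_def)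
  finally have e_eq: "2 * D * \<epsilon> + \<epsilon> = e" .
  obtain N :: nat where N: "real (length xs) * D / \<epsilon> < real N"
    using reals_Archimedean2 by blast
  obtain n c where n: "N < n" and c: "cl G (map (\<lambda>g. g [^] n) xs) = enat c"
    and cn: "real c / real n < L + \<epsilon>"
    using cl_pow_le_of_scl_le[OF scl \<open>0 < \<epsilon>\<close>] by blast
  have "0 < n" using n by simp
  have "real (length xs) * D / real n \<le> \<epsilon>"
  proof -
    have "real (length xs) * D < \<epsilon> * real N"
      using N \<open>0 < \<epsilon>\<close> by (simp add: field_simps)
    also have "\<dots> \<le> \<epsilon> * real n"
      using n \<open>0 < \<epsilon>\<close> by simp
    finally show ?thesis
      using \<open>0 < n\<close> by (simp add: field_simps)
  qed
  then have "2 * D * (real c / real n) + real (length xs) * D / real n \<le> 2 * D * (L + \<epsilon>) + \<epsilon>"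
    using cn \<open>0 \<le> D\<close> by (intro add_mono mult_left_mono) auto
  moreover have "sum_list (map \<phi> xs) \<le> 2 * D * (real c / real n) + real (length xs) * D / real n"
    unfolding D_def using sum_le_cl_map_pow[OF xs _ \<open>0 < n\<close>] c by simp
  ultimately show "sum_list (map \<phi> xs) \<le> 2 * defect G \<phi> * L + e"
    using e_eq by (simp add: D_def algebra_simps)
qed

end

section \<open>Extension along scl-isometric homomorphisms\<close>

lemma common_denominator:
  fixes Q :: "rat set"
  assumes "finite Q"
  obtains M :: nat where "0 < M" and "\<And>q. q \<in> Q \<Longrightarrow> of_nat M * q \<in> \<int>"
  using assms
proof (induction Q arbitrary: thesis rule: finite_induct)
  case empty
  then show ?case by (metis empty_iff zero_less_one)
next
  case (insert q Q)
  obtain M where M: "0 < M" "\<And>q. q \<in> Q \<Longrightarrow> of_nat M * q \<in> \<int>"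
    using insert.IH by blast
  obtain a b where ab: "quotient_of q = (a, b)" by (cases "quotient_of q")
  have "0 < b" using quotient_of_denom_pos[OF ab] .
  have q: "q = of_int a / of_int b" using quotient_of_div[OF ab] .
  show ?case
  proof (rule insert.prems)
    show "0 < M * nat b" using M(1) \<open>0 < b\<close> by simp
  next
    fix q' assume "q' \<in> insert q Q"
    then consider "q' = q" | "q' \<in> Q" by blast
    then show "of_nat (M * nat b) * q' \<in> \<int>"
    proof cases
      case 1
      have "of_nat (M * nat b) * q' = of_nat M * (of_int b * (of_int a / of_int b))"
        using 1 q \<open>0 < b\<close> by simp
      also have "\<dots> = of_int (int M * a)"
        using \<open>0 < b\<close> by simp
      finally show ?thesis
        by (simp only: Ints_of_int)
    next
      case 2
      have "of_nat (M * nat b) * q' = of_int b * (of_nat M * q')"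
        using \<open>0 < b\<close> by simp
      then show ?thesis
        using Ints_mult[OF Ints_of_int M(2)[OF 2]] by (simp only:)
    qed
  qed
qed

definition basis_chain :: "'a \<Rightarrow> 'a \<Rightarrow> rat" where
  "basis_chain g = (\<lambda>y. if y = g then 1 else 0)"

locale quasimorphism_extension = group_hom G H f + homogeneous_quasimorphism G \<phi>
  for G :: "('a, 'b) monoid_scheme" and H :: "('c, 'd) monoid_scheme" and f and \<phi> +
  assumes isometric: "scl_isometric G H f"
begin

abbreviation D :: real where "D \<equiv> defect G \<phi>"

lemma chain_powers_map_hom:
  "fst ` set t \<subseteq> carrier G \<Longrightarrow> map f (chain_powers G 1 t) = chain_powers H 1 (map (\<lambda>(g, e). (f g, e)) t)"
  by (auto simp: chain_powers_def hom_int_pow)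

lemma sum_chain_le:
  assumes t: "fst ` set t \<subseteq> carrier G" and s: "fst ` set s \<subseteq> carrier H"
    and coeff: "chain_coeff (map (\<lambda>(g, e). (f g, e)) t) = chain_coeff s"
    and cl: "cl H (chain_powers H 1 s) \<le> enat c"
  shows "(\<Sum>(g, e) \<leftarrow> t. of_int e * \<phi> g) \<le> 2 * D * real (c + length s)"
proof -
  have t_closed: "set (chain_powers G 1 t) \<subseteq> carrier G"
    using G.chain_powers_closed[OF t] .
  have "fst ` set (map (\<lambda>(g, e). (f g, e)) t) \<subseteq> carrier H"
    using t by auto
  then have "scl H (chain_powers H 1 (map (\<lambda>(g, e). (f g, e)) t)) \<le> ereal (real (c + length s))"
    using H.scl_chain_powers_le[OF s _ coeff cl] by blast
  then have "scl G (chain_powers G 1 t) \<le> ereal (real (c + length s))"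
    using isometric t_closed chain_powers_map_hom[OF t] unfolding scl_isometric_def by metis
  then have "sum_list (map \<phi> (chain_powers G 1 t)) \<le> 2 * D * real (c + length s)"
    by (rule sum_le_scl[OF t_closed])
  moreover have "sum_list (map \<phi> (chain_powers G 1 t)) = (\<Sum>(g, e) \<leftarrow> t. of_int e * \<phi> g)"
    using t homogeneous unfolding homogeneous_def by (induction t) auto
  ultimately show ?thesis by simp
qed

text \<open>\<open>certified_bound v r\<close> certifies \<open>2 D scl(v) \<le> r\<close> by an integral chain \<open>s = k v\<close> with
  \<open>cl(s) \<le> c\<close>, using \<open>scl(s) \<le> c + |s|\<close>; this avoids defining scl on rational chains.\<close>

definition certified_bound :: "('c \<Rightarrow> rat) \<Rightarrow> real \<Rightarrow> bool" where
  "certified_bound v r \<longleftrightarrow> (\<exists>(k::nat) s c. 0 < k \<and> fst ` set s \<subseteq> carrier H \<and>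
      cl H (chain_powers H 1 s) \<le> enat c \<and> (\<forall>y. of_nat k * v y = of_int (chain_coeff s y)) \<and>
      2 * D * real (c + length s) / real k \<le> r)"

lemma certified_boundI:
  "0 < (k::nat) \<Longrightarrow> fst ` set s \<subseteq> carrier H \<Longrightarrow> cl H (chain_powers H 1 s) \<le> enat c \<Longrightarrow>
    (\<And>y. of_nat k * v y = of_int (chain_coeff s y)) \<Longrightarrow> 2 * D * real (c + length s) / real k \<le> r \<Longrightarrow>
    certified_bound v r"
  unfolding certified_bound_def by blast

lemma certified_bound_zero: "certified_bound 0 0"
  by (rule certified_boundI[of 1 "[]" 0]) (simp_all add: H.cl_Nil)

lemma certified_bound_add:
  assumes "certified_bound v r" and "certified_bound w r'"
  shows "certified_bound (v + w) (r + r')"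
proof -
  obtain k1 :: nat and s1 c1 where 1: "0 < k1" "fst ` set s1 \<subseteq> carrier H" "cl H (chain_powers H 1 s1) \<le> enat c1"
    "\<And>y. of_nat k1 * v y = of_int (chain_coeff s1 y)" "2 * D * real (c1 + length s1) / real k1 \<le> r"
    using assms(1) unfolding certified_bound_def by blast
  obtain k2 :: nat and s2 c2 where 2: "0 < k2" "fst ` set s2 \<subseteq> carrier H" "cl H (chain_powers H 1 s2) \<le> enat c2"
    "\<And>y. of_nat k2 * w y = of_int (chain_coeff s2 y)" "2 * D * real (c2 + length s2) / real k2 \<le> r'"
    using assms(2) unfolding certified_bound_def by blast
  define s where "s = concat (replicate k2 s1) @ concat (replicate k1 s2)"
  show ?thesis
  proof (rule certified_boundI[of "k1 * k2" s "k2 * c1 + k1 * c2"])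
    show "0 < k1 * k2" using 1 2 by simp
    show "fst ` set s \<subseteq> carrier H" using 1(2) 2(2) by (force simp: s_def)
    have "set (chain_powers H 1 (concat (replicate n s'))) \<subseteq> carrier H"
      if "fst ` set s' \<subseteq> carrier H" for n s'
      using that by (intro H.chain_powers_closed) force
    then show "cl H (chain_powers H 1 s) \<le> enat (k2 * c1 + k1 * c2)"
      using H.cl_append H.cl_chain_powers_replicate[OF 1(2,3)] H.cl_chain_powers_replicate[OF 2(2,3)]
        1(2) 2(2) by (simp add: s_def)
    show "of_nat (k1 * k2) * (v + w) y = of_int (chain_coeff s y)" for y
      using 1(4)[of y] 2(4)[of y] by (simp add: s_def chain_coeff_replicate algebra_simps)
    have "2 * D * real (k2 * c1 + k1 * c2 + length s) / real (k1 * k2)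
        = 2 * D * real (c1 + length s1) / real k1 + 2 * D * real (c2 + length s2) / real k2"
      using 1(1) 2(1) by (simp add: s_def length_concat sum_list_replicate field_simps)
    then show "2 * D * real (k2 * c1 + k1 * c2 + length s) / real (k1 * k2) \<le> r + r'"
      using 1(5) 2(5) by simp
  qed
qed

lemma certified_bound_scale:
  assumes "certified_bound v r" and "0 < q"
  shows "certified_bound (\<lambda>y. q * v y) (of_rat q * r)"
proof -
  obtain k :: nat and s c where 1: "0 < k" "fst ` set s \<subseteq> carrier H" "cl H (chain_powers H 1 s) \<le> enat c"
    "\<And>y. of_nat k * v y = of_int (chain_coeff s y)" "2 * D * real (c + length s) / real k \<le> r"
    using assms(1) unfolding certified_bound_def by blast
  obtain a b where ab: "quotient_of q = (a, b)" by (cases "quotient_of q")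
  have "0 < b" using quotient_of_denom_pos[OF ab] .
  have q: "q = of_int a / of_int b" using quotient_of_div[OF ab] .
  have "0 < a" using assms(2) \<open>0 < b\<close> q by (simp add: zero_less_divide_iff)
  have q_real: "(of_rat q :: real) = of_int a / of_int b"
    using q by (simp add: of_rat_divide)
  show ?thesis
  proof (rule certified_boundI[of "k * nat b" "concat (replicate (nat a) s)" "nat a * c"])
    show "0 < k * nat b" using 1(1) \<open>0 < b\<close> by simp
    show "fst ` set (concat (replicate (nat a) s)) \<subseteq> carrier H" using 1(2) by force
    show "cl H (chain_powers H 1 (concat (replicate (nat a) s))) \<le> enat (nat a * c)"
      by (rule H.cl_chain_powers_replicate[OF 1(2,3)])
    show "of_nat (k * nat b) * (q * v y) = of_int (chain_coeff (concat (replicate (nat a) s)) y)" for y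
      using 1(4)[of y] \<open>0 < a\<close> \<open>0 < b\<close> q by (simp add: chain_coeff_replicate field_simps)
    have "2 * D * real (nat a * c + length (concat (replicate (nat a) s))) / real (k * nat b)
        = of_rat q * (2 * D * real (c + length s) / real k)"
      using \<open>0 < a\<close> \<open>0 < b\<close> 1(1) by (simp add: q_real length_concat sum_list_replicate field_simps)
    also have "\<dots> \<le> of_rat q * r"
      using 1(5) assms(2) by (intro mult_left_mono) auto
    finally show "2 * D * real (nat a * c + length (concat (replicate (nat a) s))) / real (k * nat b)
        \<le> of_rat q * r" .
  qed
qed

lemma certified_bound_uminus:
  assumes "certified_bound v r"
  shows "certified_bound (- v) r"
proof -
  obtain k :: nat and s c where 1: "0 < k" "fst ` set s \<subseteq> carrier H" "cl H (chain_powers H 1 s) \<le> enat c"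
    "\<And>y. of_nat k * v y = of_int (chain_coeff s y)" "2 * D * real (c + length s) / real k \<le> r"
    using assms unfolding certified_bound_def by blast
  show ?thesis
  proof (rule certified_boundI[OF 1(1) _ H.cl_chain_powers_rev_neg[OF 1(2,3)]])
    show "fst ` set (rev (map (\<lambda>(g, e). (g, - e)) s)) \<subseteq> carrier H" using 1(2) by auto
    show "of_nat k * (- v) y = of_int (chain_coeff (rev (map (\<lambda>(g, e). (g, - e)) s)) y)" for y
      using 1(4)[of y] by (simp add: chain_coeff_rev_neg)
    show "2 * D * real (c + length (rev (map (\<lambda>(g, e). (g, - e)) s))) / real k \<le> r"
      using 1(5) by simp
  qed
qed

sublocale cert: sublinear_bound certified_bound
  by unfold_locales
    (auto intro: certified_bound_add certified_bound_scale certified_bound_uminus certified_bound_zero)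

definition push_chain :: "(rat \<times> 'a) list \<Rightarrow> 'c \<Rightarrow> rat" where
  "push_chain cs y = (\<Sum>(q, g) \<leftarrow> cs. if f g = y then q else 0)"

definition chain_value :: "(rat \<times> 'a) list \<Rightarrow> real" where
  "chain_value cs = (\<Sum>(q, g) \<leftarrow> cs. of_rat q * \<phi> g)"

definition pushed_graph :: "(('c \<Rightarrow> rat) \<times> real) set" where
  "pushed_graph = {(push_chain cs, chain_value cs) | cs. snd ` set cs \<subseteq> carrier G}"

lemma scaled_chain_value_le:
  assumes cs: "snd ` set cs \<subseteq> carrier G" and N: "\<And>q. q \<in> fst ` set cs \<Longrightarrow> of_nat N * q \<in> \<int>"
    and s: "fst ` set s \<subseteq> carrier H" and cl: "cl H (chain_powers H 1 s) \<le> enat c"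
    and coeff: "\<And>y. of_nat N * push_chain cs y = of_int (chain_coeff s y)"
  shows "real N * chain_value cs \<le> 2 * D * real (c + length s)"
proof -
  have integral: "of_int \<lfloor>of_nat N * q\<rfloor> = of_nat N * q" if "q \<in> fst ` set cs" for q
    using N[OF that] by (simp add: of_int_floor_cancel Ints_def)
  define t where "t = map (\<lambda>(q, g). (g, \<lfloor>of_nat N * q\<rfloor>)) cs"
  have t: "fst ` set t \<subseteq> carrier G" using cs by (force simp: t_def)
  have "chain_coeff (map (\<lambda>(g, e). (f g, e)) t) = chain_coeff s"
  proof
    fix y
    have "(of_int (chain_coeff (map (\<lambda>(g, e). (f g, e)) t) y) :: rat) = of_nat N * push_chain cs y"
      using integral unfolding t_def push_chain_def by (induction cs) (auto simp: algebra_simps)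
    then show "chain_coeff (map (\<lambda>(g, e). (f g, e)) t) y = chain_coeff s y"
      using coeff[of y] by (simp only: of_int_eq_iff)
  qed
  then have "(\<Sum>(g, e) \<leftarrow> t. of_int e * \<phi> g) \<le> 2 * D * real (c + length s)"
    using sum_chain_le[OF t s _ cl] by blast
  moreover have "real_of_int \<lfloor>of_nat N * q\<rfloor> = real N * of_rat q" if "q \<in> fst ` set cs" for q
  proof -
    have "real_of_int \<lfloor>of_nat N * q\<rfloor> = of_rat (of_int \<lfloor>of_nat N * q\<rfloor>)"
      by simp
    also have "\<dots> = real N * of_rat q"
      by (simp only: integral[OF that] of_rat_mult of_rat_of_nat_eq)
    finally show ?thesis .
  qed
  then have "(\<Sum>(g, e) \<leftarrow> t. of_int e * \<phi> g) = real N * chain_value cs"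
    unfolding t_def chain_value_def by (induction cs) (auto simp: algebra_simps)
  ultimately show ?thesis by simp
qed

lemma chain_value_le:
  assumes cs: "snd ` set cs \<subseteq> carrier G" and "certified_bound (push_chain cs) r"
  shows "chain_value cs \<le> r"
proof -
  obtain k :: nat and s c where k: "0 < k" and s: "fst ` set s \<subseteq> carrier H"
    and cl: "cl H (chain_powers H 1 s) \<le> enat c"
    and coeff: "\<And>y. of_nat k * push_chain cs y = of_int (chain_coeff s y)"
    and bound: "2 * D * real (c + length s) / real k \<le> r"
    using assms(2) unfolding certified_bound_def by blast
  \<comment> \<open>clearing denominators turns \<open>cs\<close> into an integral chain pushed forward to copies of \<open>s\<close>\<close>
  obtain M where M: "0 < M" "\<And>q. q \<in> fst ` set cs \<Longrightarrow> of_nat M * q \<in> \<int>"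
    using common_denominator[of "fst ` set cs"] by blast
  have "of_nat (M * k) * q \<in> \<int>" if "q \<in> fst ` set cs" for q
  proof -
    have "of_nat (M * k) * q = of_nat k * (of_nat M * q)"
      by (simp add: algebra_simps)
    then show ?thesis
      using Ints_mult[OF Ints_of_nat M(2)[OF that]] by (simp only:)
  qed
  moreover have "fst ` set (concat (replicate M s)) \<subseteq> carrier H"
    using s by force
  moreover have "of_nat (M * k) * push_chain cs y = of_int (chain_coeff (concat (replicate M s)) y)" for y
    using coeff[of y] by (simp add: chain_coeff_replicate)
  ultimately have "real (M * k) * chain_value cs \<le> 2 * D * real (M * c + length (concat (replicate M s)))"
    using scaled_chain_value_le[OF cs _ _ H.cl_chain_powers_replicate[OF s cl]] by blast
  also have "\<dots> = real M * (2 * D * real (c + length s))"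
    by (simp add: length_concat sum_list_replicate algebra_simps)
  finally have "real M * (real k * chain_value cs) \<le> real M * (2 * D * real (c + length s))"
    by (simp add: algebra_simps)
  then have "real k * chain_value cs \<le> 2 * D * real (c + length s)"
    using M(1) by simp
  also have "\<dots> \<le> real k * r"
    using k bound by (simp add: field_simps)
  finally show ?thesis
    using k by simp
qed

lemma pushed_graph_dominated: "dominated_graph certified_bound pushed_graph"
  unfolding dominated_graph_def
proof (intro conjI allI impI)
  fix a x b y assume "(a, x) \<in> pushed_graph" "(b, y) \<in> pushed_graph"
  then obtain cs cs' where "a = push_chain cs" "x = chain_value cs" "snd ` set cs \<subseteq> carrier G"
    "b = push_chain cs'" "y = chain_value cs'" "snd ` set cs' \<subseteq> carrier G"
    unfolding pushed_graph_def by blast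
  moreover have "push_chain cs + push_chain cs' = push_chain (cs @ cs')"
    by (auto simp: push_chain_def)
  moreover have "chain_value cs + chain_value cs' = chain_value (cs @ cs')"
    by (simp add: chain_value_def)
  ultimately show "(a + b, x + y) \<in> pushed_graph"
    unfolding pushed_graph_def by (intro CollectI exI[of _ "cs @ cs'"]) auto
next
  fix a x q assume "(a, x) \<in> pushed_graph"
  then obtain cs where "a = push_chain cs" "x = chain_value cs" "snd ` set cs \<subseteq> carrier G"
    unfolding pushed_graph_def by blast
  moreover have "(\<lambda>y. q * push_chain cs y) = push_chain (map (\<lambda>(q', g). (q * q', g)) cs)"
    unfolding fun_eq_iff push_chain_def by (induction cs) (auto simp: algebra_simps)
  moreover have "of_rat q * chain_value cs = chain_value (map (\<lambda>(q', g). (q * q', g)) cs)"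
    unfolding chain_value_def by (induction cs) (auto simp: algebra_simps of_rat_mult)
  ultimately show "((\<lambda>y. q * a y), of_rat q * x) \<in> pushed_graph"
    unfolding pushed_graph_def by force
next
  fix a x r assume "(a, x) \<in> pushed_graph" "certified_bound a r"
  then show "x \<le> r"
    unfolding pushed_graph_def using chain_value_le by blast
qed

lemma zero_in_pushed_graph: "(0, 0) \<in> pushed_graph"
proof -
  have "push_chain [] = 0" "chain_value [] = 0"
    by (auto simp: push_chain_def chain_value_def)
  then show ?thesis unfolding pushed_graph_def by force
qed

lemma pushed_graph_basis_chain: "g \<in> carrier G \<Longrightarrow> (basis_chain (f g), \<phi> g) \<in> pushed_graph"
proof -
  assume "g \<in> carrier G"
  moreover have "push_chain [(1, g)] = basis_chain (f g)" "chain_value [(1, g)] = \<phi> g"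
    by (auto simp: push_chain_def chain_value_def basis_chain_def)
  ultimately show ?thesis
    unfolding pushed_graph_def by (intro CollectI exI[of _ "[(1, g)]"]) auto
qed

lemma certified_bound_pow:
  assumes g: "g \<in> carrier H" and "0 < k"
  shows "certified_bound (basis_chain (g [^]\<^bsub>H\<^esub> n) - (\<lambda>y. of_int n * basis_chain g y)) (4 * D / real k)"
proof (rule certified_boundI[of k "[(g [^]\<^bsub>H\<^esub> n, int k), (g, - n * int k)]" 0])
  have "prodl H (chain_powers H 1 [(g [^]\<^bsub>H\<^esub> n, int k), (g, - n * int k)]) = \<one>\<^bsub>H\<^esub>"
    using g by (simp add: H.int_pow_pow H.int_pow_mult[symmetric])
  then show "cl H (chain_powers H 1 [(g [^]\<^bsub>H\<^esub> n, int k), (g, - n * int k)]) \<le> enat 0"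
    using g by (intro H.cl_le_of_prodl) simp_all
qed (use g \<open>0 < k\<close> in \<open>auto simp: basis_chain_def algebra_simps\<close>)

lemma certified_bound_mult:
  assumes g: "g \<in> carrier H" and h: "h \<in> carrier H" and "0 < k"
  shows "certified_bound (basis_chain g + basis_chain h - basis_chain (g \<otimes>\<^bsub>H\<^esub> h)) (D + 6 * D / real k)"
proof (rule certified_boundI[of k "[(g, int k), (h, int k), (g \<otimes>\<^bsub>H\<^esub> h, - int k)]" "k div 2"])
  have "chain_powers H 1 [(g, int k), (h, int k), (g \<otimes>\<^bsub>H\<^esub> h, - int k)] =
      [g [^]\<^bsub>H\<^esub> k, h [^]\<^bsub>H\<^esub> k, inv\<^bsub>H\<^esub> ((g \<otimes>\<^bsub>H\<^esub> h) [^]\<^bsub>H\<^esub> k)]"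
    using g h by (simp add: int_pow_int H.int_pow_neg_int)
  then show "cl H (chain_powers H 1 [(g, int k), (h, int k), (g \<otimes>\<^bsub>H\<^esub> h, - int k)]) \<le> enat (k div 2)"
    using H.cl_pants[OF g h] by simp
  have "2 * real (k div 2) \<le> real k" by linarith
  then have "2 * D * real (k div 2) \<le> D * real k"
    using defect_nonneg by (metis mult.assoc mult.commute mult_left_mono)
  then show "2 * D * real (k div 2 + length [(g, int k), (h, int k), (g \<otimes>\<^bsub>H\<^esub> h, - int k)]) / real k
      \<le> D + 6 * D / real k"
    using \<open>0 < k\<close> by (simp add: field_simps)
qed (use g h \<open>0 < k\<close> in \<open>auto simp: basis_chain_def algebra_simps\<close>)

lemma abs_le_of_certified_bounds:
  assumes "\<And>a. \<Phi> (- a) = - \<Phi> a" and "\<And>a r. certified_bound a r \<Longrightarrow> \<Phi> a \<le> r"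
    and "\<And>k. 0 < k \<Longrightarrow> certified_bound v (a + C / real k)"
  shows "\<bar>\<Phi> v\<bar> \<le> a"
proof -
  have "\<Phi> v \<le> a"
    by (rule le_of_forall_le_plus_div) (rule assms(2)[OF assms(3)])
  moreover have "\<Phi> (- v) \<le> a"
    by (rule le_of_forall_le_plus_div) (rule assms(2)[OF certified_bound_uminus[OF assms(3)]])
  ultimately show ?thesis
    using assms(1) by (simp add: abs_le_iff)
qed

theorem extension:
  obtains \<psi> where "\<psi> \<in> Qm H" and "defect H \<psi> = D" and "\<And>g. g \<in> carrier G \<Longrightarrow> \<psi> (f g) = \<phi> g"
proof -
  obtain \<Phi> where \<Phi>_add: "\<And>a b. \<Phi> (a + b) = \<Phi> a + \<Phi> b"
    and \<Phi>_scale: "\<And>q a. \<Phi> (\<lambda>i. q * a i) = of_rat q * \<Phi> a"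
    and \<Phi>_graph: "\<And>a x. (a, x) \<in> pushed_graph \<Longrightarrow> \<Phi> a = x"
    and \<Phi>_le: "\<And>a r. certified_bound a r \<Longrightarrow> \<Phi> a \<le> r"
    using cert.rat_hahn_banach[OF pushed_graph_dominated zero_in_pushed_graph] by blast
  have \<Phi>_uminus: "\<Phi> (- a) = - \<Phi> a" for a
    using \<Phi>_scale[of "-1" a] by (simp add: fun_Compl_def)
  have \<Phi>_diff: "\<Phi> (a - b) = \<Phi> a - \<Phi> b" for a b
    using \<Phi>_add[of a "- b"] \<Phi>_uminus[of b] by simp
  have \<Phi>_abs_le: "\<bar>\<Phi> v\<bar> \<le> a" if "\<And>k. 0 < k \<Longrightarrow> certified_bound v (a + C / real k)" for v a C
    using \<Phi>_uminus \<Phi>_le that by (rule abs_le_of_certified_bounds)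
  define \<psi> where "\<psi> g = \<Phi> (basis_chain g)" for g
  have extends: "\<psi> (f g) = \<phi> g" if "g \<in> carrier G" for g
    unfolding \<psi>_def using \<Phi>_graph pushed_graph_basis_chain[OF that] .
  have "homogeneous H \<psi>"
    unfolding homogeneous_def
  proof (intro ballI allI)
    fix g n assume g: "g \<in> carrier H"
    have "\<bar>\<Phi> (basis_chain (g [^]\<^bsub>H\<^esub> n) - (\<lambda>y. of_int n * basis_chain g y))\<bar> \<le> 0"
      using certified_bound_pow[OF g] by (intro \<Phi>_abs_le[where C = "4 * D"]) simp
    then show "\<psi> (g [^]\<^bsub>H\<^esub> n) = of_int n * \<psi> g"
      unfolding \<psi>_def \<Phi>_diff \<Phi>_scale by simp
  qed
  moreover have "\<bar>\<psi> g + \<psi> h - \<psi> (g \<otimes>\<^bsub>H\<^esub> h)\<bar> \<le> D"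
    if g: "g \<in> carrier H" and h: "h \<in> carrier H" for g h
    using \<Phi>_abs_le[where C = "6 * D", OF certified_bound_mult[OF g h]]
    unfolding \<psi>_def \<Phi>_diff \<Phi>_add by simp
  then have "quasimorphism H \<psi>" and "defect H \<psi> \<le> D"
    using defect_le[of H \<psi> D] H.one_closed by blast+
  moreover have "D \<le> defect H \<psi>"
    using defect_le_of_extends[OF G.is_monoid homh \<open>quasimorphism H \<psi>\<close>] extends by blast
  ultimately show thesis
    using that extends by (simp add: Qm_def)
qed

end

theorem corollary2p4:
  fixes G1 :: "('a, 'b) monoid_scheme" and G2 :: "('c, 'd) monoid_scheme"
    and f :: "'a \<Rightarrow> 'c"
  assumes "group G1" and "group G2" and "f \<in> hom G1 G2"
    and "scl_isometric G1 G2 f"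
  shows "(\<forall>\<phi>1 \<in> Qm G1. \<exists>\<phi>2 \<in> Qm G2.
            defect G2 \<phi>2 = defect G1 \<phi>1 \<and> (\<forall>g \<in> carrier G1. \<phi>2 (f g) = \<phi>1 g))
       \<and> (\<forall>\<phi>2 \<in> Qm G2. \<phi>2 \<circ> f \<in> Qm G1)
       \<and> (\<forall>\<psi> \<in> Homr G2. \<psi> \<circ> f \<in> Homr G1)
       \<and> (\<forall>\<phi>1 \<in> Qm G1. \<exists>\<phi>2 \<in> Qm G2. (\<lambda>g. \<phi>1 g - \<phi>2 (f g)) \<in> Homr G1)"
proof -
  have extend: "\<exists>\<phi>2 \<in> Qm G2. defect G2 \<phi>2 = defect G1 \<phi>1 \<and> (\<forall>g \<in> carrier G1. \<phi>2 (f g) = \<phi>1 g)"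
    if "\<phi>1 \<in> Qm G1" for \<phi>1
  proof -
    interpret quasimorphism_extension G1 G2 f \<phi>1
      using assms that
      by (auto intro!: quasimorphism_extension.intro group_hom.intro homogeneous_quasimorphism.intro
          simp: Qm_def group_hom_axioms_def homogeneous_quasimorphism_axioms_def
            quasimorphism_extension_axioms_def)
    show ?thesis
      by (rule extension) blast
  qed
  moreover have "(\<lambda>g. \<phi>1 g - \<phi>2 (f g)) \<in> Homr G1" if "\<forall>g \<in> carrier G1. \<phi>2 (f g) = \<phi>1 g" for \<phi>1 \<phi>2
    using that group.is_monoid[OF assms(1)] by (simp add: Homr_def monoid.m_closed)
  ultimately show ?thesis
    using Qm_comp_hom[OF assms(1-3)] Homr_comp_hom[OF assms(3)] by meson
qed

end
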